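(* Let $N\simeq\mathbb{Z}^2$ be a lattice and $N_{\mathbb{R}}=N\otimes_{\mathbb{Z}}\mathbb{R}$. For any two reflexive polygons $\nabla,\nabla'$ in $N_{\mathbb{R}}$ there is a finite sequence $\nabla=\nabla_0,\nabla_1,\dots,\nabla_k=\nabla'$ of reflexive polygons in $N_{\mathbb{R}}$ such that for each $i$ either $\nabla_{i}\subset\nabla_{i+1}$ or $\nabla_{i}\supset\nabla_{i+1}$. (No identification modulo unimodular equivalence, i.e. modulo $GL(N)$, is made.) The same statement holds with "reflexive polygons" replaced by "terminal polygons" throughout.
   Context: Let $M=\mathrm{Hom}(N,\mathbb{Z})$. A lattice polygon $\nabla\subset N_{\mathbb{R}}$ is reflexive if it contains the origin as an interior point and its polar dual $\nabla^*=\{u\in M_{\mathbb{R}} : \langle u,v\rangle\ge -1 \text{ for all } v\in\nabla\}$ is again a lattice polygon (vertices in $M$). A lattice polygon $\nabla\subset N_{\mathbb{R}}$ is terminal if it contains the origin as an interior point and $\nabla\cap N$ consists exactly of the vertices of $\nabla$ and the origin. *)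

theory Defs
  imports "HOL-Analysis.Analysis"
begin

text \<open>We identify N with the standard lattice Z^2 in N_R = R^2 (modelled as real \<times> real),
and M = Hom(N,Z) with Z^2 via the standard pairing (the inner product).\<close>

definition lattice_pt :: "real \<times> real \<Rightarrow> bool" where
  "lattice_pt v \<longleftrightarrow> fst v \<in> \<int> \<and> snd v \<in> \<int>"

definition lattice_polygon :: "(real \<times> real) set \<Rightarrow> bool" where
  "lattice_polygon P \<longleftrightarrow>
     (\<exists>S. finite S \<and> (\<forall>v\<in>S. lattice_pt v) \<and> P = convex hull S) \<and> interior P \<noteq> {}"

definition polar_dual :: "(real \<times> real) set \<Rightarrow> (real \<times> real) set" where
  "polar_dual P = {u. \<forall>v\<in>P. inner u v \<ge> -1}"

definition reflexive_polygon :: "(real \<times> real) set \<Rightarrow> bool" where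
  "reflexive_polygon P \<longleftrightarrow>
     lattice_polygon P \<and> 0 \<in> interior P \<and> lattice_polygon (polar_dual P)"

definition terminal_polygon :: "(real \<times> real) set \<Rightarrow> bool" where
  "terminal_polygon P \<longleftrightarrow>
     lattice_polygon P \<and> 0 \<in> interior P \<and>
     {v \<in> P. lattice_pt v} = {v. v extreme_point_of P} \<union> {0}"

end

(* Call a polygon K lattice-ray-bounded if t z lies outside K for every nonzero lattice point z
   and every t > 1; reflexive and terminal polygons are.  A descent on lattice determinants shows
   that a lattice-ray-bounded lattice polygon with 0 in its interior contains, for some lattice
   basis a, b, one of the basic polygons conv{a, b, -a-b}, conv{a, b, -a, -b} or conv{a, b, -a-2b}.
   These, the hexagon conv{a, a+b, b, -a, -a-b, -b} and the triangle conv{-a-b, 2a-b, 2b-a} are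
   reflexive, being unimodular images of standard ones; the first two and the hexagon are also
   terminal.  Inclusions link every basic polygon to the standard square: the triangle and the
   square of a basis lie in its hexagon, which also contains the square of the sheared basis
   a, a+b, so the Euclidean algorithm reaches the standard basis; conv{a, b, -a-2b} and the
   triangle of a+b, b both lie in conv{-a-2b, 2a+b, b-a}.  For terminal polygons the last basic
   polygon cannot occur, since -b would be a lattice point that is not a vertex. *)
theory Submission
  imports Defs
begin

section \<open>Lattice vectors and unimodular bases\<close>

definition lat :: "int \<times> int \<Rightarrow> real \<times> real" where
  "lat z = (of_int (fst z), of_int (snd z))"

definition iscale :: "int \<Rightarrow> int \<times> int \<Rightarrow> int \<times> int" where
  "iscale k z = (k * fst z, k * snd z)"

definition det2 :: "int \<times> int \<Rightarrow> int \<times> int \<Rightarrow> int" where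
  "det2 a b = fst a * snd b - snd a * fst b"

definition unimodular :: "int \<times> int \<Rightarrow> int \<times> int \<Rightarrow> bool" where
  "unimodular a b \<longleftrightarrow> det2 a b = 1 \<or> det2 a b = -1"

lemma lat_add [simp]: "lat (x + y) = lat x + lat y"
  and lat_minus [simp]: "lat (- x) = - lat x"
  and lat_diff [simp]: "lat (x - y) = lat x - lat y"
  and lat_zero [simp]: "lat 0 = 0"
  and lat_iscale [simp]: "lat (iscale k x) = of_int k *\<^sub>R lat x"
  by (auto simp: lat_def iscale_def zero_prod_def)

lemma lat_eq_iff [simp]: "lat x = lat y \<longleftrightarrow> x = y"
  by (auto simp: lat_def prod_eq_iff)

lemma lat_eq_0_iff [simp]: "lat x = 0 \<longleftrightarrow> x = 0"
  using lat_eq_iff[of x 0] by simp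

lemma inner_lat: "inner (lat x) (lat y) = of_int (fst x * fst y + snd x * snd y)"
  by (simp add: lat_def inner_real_def)

lemma lattice_pt_iff: "lattice_pt v \<longleftrightarrow> v \<in> range lat"
proof
  assume "lattice_pt v"
  then obtain i j where "fst v = of_int i" "snd v = of_int j"
    unfolding lattice_pt_def by (auto elim!: Ints_cases)
  then have "v = lat (i, j)" by (simp add: prod_eq_iff lat_def)
  then show "v \<in> range lat" by blast
qed (auto simp: lattice_pt_def lat_def)

lemma lattice_pt_lat [simp]: "lattice_pt (lat z)"
  by (simp add: lattice_pt_iff)

lemma det2_self [simp]: "det2 p p = 0"
  by (simp add: det2_def)

lemma det2_zero_left [simp]: "det2 0 q = 0"
  and det2_zero_right [simp]: "det2 p 0 = 0"
  by (simp_all add: det2_def)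

lemma det2_swap: "det2 q p = - det2 p q"
  by (simp add: det2_def)

lemma det2_iscale_right: "det2 r (iscale d w) = d * det2 r w"
  by (simp add: det2_def iscale_def algebra_simps)

lemma det2_iscale_add: "det2 r (iscale a p + iscale b q) = a * det2 r p + b * det2 r q"
  by (simp add: det2_def iscale_def algebra_simps)

lemma det2_right_combination:
  assumes "iscale d w = iscale a p + iscale b q"
  shows "d * det2 x w = a * det2 x p + b * det2 x q"
  using arg_cong[OF assms, of "det2 x"] by (simp add: det2_iscale_right det2_iscale_add)

lemma det2_cramer: "iscale (det2 p q) e = iscale (det2 e q) p + iscale (det2 p e) q"
  by (simp add: det2_def iscale_def prod_eq_iff algebra_simps)

lemma unimodular_swap: "unimodular a b \<Longrightarrow> unimodular b a"
  by (auto simp: unimodular_def det2_def algebra_simps)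

lemma unimodular_shear: "unimodular a b \<Longrightarrow> unimodular a (b + iscale c a)"
  by (auto simp: unimodular_def det2_def iscale_def algebra_simps)

section \<open>Invariance under unimodular maps\<close>

definition basis_map :: "int \<times> int \<Rightarrow> int \<times> int \<Rightarrow> real \<times> real \<Rightarrow> real \<times> real" where
  "basis_map a b v = fst v *\<^sub>R lat a + snd v *\<^sub>R lat b"

lemma linear_basis_map: "linear (basis_map a b)"
  by (rule linearI) (auto simp: basis_map_def algebra_simps)

lemma basis_map_lat: "basis_map a b (lat z) = lat (iscale (fst z) a + iscale (snd z) b)"
  by (simp add: basis_map_def lat_def iscale_def)

lemma basis_map_zero [simp]: "basis_map a b 0 = 0"
  by (simp add: basis_map_def)

lemma basis_map_inverse:
  assumes "unimodular a b"
  obtains a' b' where "unimodular a' b'" "\<And>x. basis_map a' b' (basis_map a b x) = x"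
    "\<And>x. basis_map a b (basis_map a' b' x) = x"
proof -
  define d where "d = det2 a b"
  have dd: "of_int d * of_int d = (1::real)"
    using assms by (auto simp: unimodular_def d_def)
  define a' where "a' = iscale d (snd b, - snd a)"
  define b' where "b' = iscale d (- fst b, fst a)"
  have "det2 a' b' = d * d * d"
    by (simp add: a'_def b'_def iscale_def det2_def d_def algebra_simps)
  then have uni: "unimodular a' b'"
    using assms by (auto simp: unimodular_def d_def)
  have d: "(of_int d :: real) = of_int (fst a) * of_int (snd b) - of_int (snd a) * of_int (fst b)"
    by (simp add: d_def det2_def)
  have "basis_map a' b' (basis_map a b x) = (of_int d * of_int d) *\<^sub>R x"
    "basis_map a b (basis_map a' b' x) = (of_int d * of_int d) *\<^sub>R x" for x :: "real \<times> real"
    by (simp_all add: basis_map_def lat_def a'_def b'_def iscale_def d prod_eq_iff algebra_simps)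
  then show ?thesis
    using that[OF uni] by (simp add: dd)
qed

lemma bij_basis_map:
  assumes "unimodular a b"
  shows "bij (basis_map a b)"
proof -
  obtain a' b' where "\<And>x. basis_map a' b' (basis_map a b x) = x"
    "\<And>x. basis_map a b (basis_map a' b' x) = x"
    using basis_map_inverse[OF assms] by metis
  then show ?thesis
    by (intro bij_betw_byWitness[where f' = "basis_map a' b'"]) auto
qed

lemma inner_basis_map:
  "inner u (basis_map a b v) = inner (basis_map (fst a, fst b) (snd a, snd b) u) v"
  by (cases u; cases v) (simp add: basis_map_def lat_def inner_real_def algebra_simps)

lemma lattice_pt_basis_map:
  assumes "lattice_pt v"
  shows "lattice_pt (basis_map a b v)"
proof -
  obtain z where "v = lat z" using assms by (auto simp: lattice_pt_iff)
  then show ?thesis by (simp only: basis_map_lat lattice_pt_lat)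
qed

lemma lattice_polygon_basis_map:
  assumes "unimodular a b" "lattice_polygon P"
  shows "lattice_polygon (basis_map a b ` P)"
proof -
  obtain S where S: "finite S" "\<forall>v\<in>S. lattice_pt v" "P = convex hull S"
    and "interior P \<noteq> {}"
    using assms(2) unfolding lattice_polygon_def by blast
  moreover have "basis_map a b ` P = convex hull (basis_map a b ` S)"
    using S(3) convex_hull_linear_image[OF linear_basis_map] by simp
  moreover have "interior (basis_map a b ` P) = basis_map a b ` interior P"
    by (rule interior_bijective_linear_image[OF linear_basis_map bij_basis_map[OF assms(1)]])
  ultimately show ?thesis
    unfolding lattice_polygon_def
    by (intro conjI exI[of _ "basis_map a b ` S"]) (auto simp: lattice_pt_basis_map)
qed

lemma polar_dual_basis_map:
  assumes "unimodular a b"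
  obtains a' b' where "unimodular a' b'" "polar_dual (basis_map a b ` P) = basis_map a' b' ` polar_dual P"
proof -
  define t where "t = basis_map (fst a, fst b) (snd a, snd b)"
  have "unimodular (fst a, fst b) (snd a, snd b)"
    using assms by (simp add: unimodular_def det2_def algebra_simps)
  then obtain a' b' where uni: "unimodular a' b'"
    and inv1: "\<And>x. basis_map a' b' (t x) = x" and inv2: "\<And>x. t (basis_map a' b' x) = x"
    unfolding t_def using basis_map_inverse by blast
  have "polar_dual (basis_map a b ` P) = {u. t u \<in> polar_dual P}"
    by (auto simp: polar_dual_def inner_basis_map t_def)
  also have "\<dots> = basis_map a' b' ` polar_dual P"
  proof (intro equalityI subsetI)
    fix u assume "u \<in> {u. t u \<in> polar_dual P}"
    then show "u \<in> basis_map a' b' ` polar_dual P"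
      using inv1[of u] by (metis image_eqI mem_Collect_eq)
  qed (auto simp: inv2)
  finally show ?thesis using that[OF uni] by blast
qed

lemma reflexive_polygon_basis_map:
  assumes "unimodular a b" "reflexive_polygon P"
  shows "reflexive_polygon (basis_map a b ` P)"
proof -
  have "0 \<in> interior (basis_map a b ` P)"
    using assms interior_bijective_linear_image[OF linear_basis_map bij_basis_map]
    unfolding reflexive_polygon_def by (metis basis_map_zero image_eqI)
  moreover obtain a' b' where "unimodular a' b'"
    "polar_dual (basis_map a b ` P) = basis_map a' b' ` polar_dual P"
    using polar_dual_basis_map[OF assms(1)] .
  ultimately show ?thesis
    using assms lattice_polygon_basis_map unfolding reflexive_polygon_def by metis
qed

lemma extreme_points_basis_map:
  assumes "unimodular a b"
  shows "{v. v extreme_point_of (basis_map a b ` P)} = basis_map a b ` {v. v extreme_point_of P}"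
proof -
  have inj: "inj (basis_map a b)"
    using bij_basis_map[OF assms] bij_is_inj by blast
  have "open_segment (basis_map a b p) (basis_map a b q) = basis_map a b ` open_segment p q" for p q
    by (rule open_segment_linear_image[OF linear_basis_map inj])
  then have ext: "basis_map a b y extreme_point_of (basis_map a b ` P) \<longleftrightarrow> y extreme_point_of P"
    for y unfolding extreme_point_of_def by (simp add: inj_image_mem_iff[OF inj])
  show ?thesis
  proof (intro equalityI subsetI)
    fix x assume x: "x \<in> {v. v extreme_point_of (basis_map a b ` P)}"
    then obtain y where "x = basis_map a b y" by (auto simp: extreme_point_of_def)
    then show "x \<in> basis_map a b ` {v. v extreme_point_of P}" using x ext by auto
  qed (auto simp: ext)
qed

lemma lattice_points_basis_map:
  assumes "unimodular a b"
  shows "{v \<in> basis_map a b ` P. lattice_pt v} = basis_map a b ` {v \<in> P. lattice_pt v}"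
proof -
  obtain a' b' where inv: "\<And>x. basis_map a' b' (basis_map a b x) = x"
    using basis_map_inverse[OF assms] by metis
  then have "lattice_pt (basis_map a b x) \<longleftrightarrow> lattice_pt x" for x
    by (metis lattice_pt_basis_map)
  then show ?thesis by auto
qed

lemma terminal_polygon_basis_map:
  assumes "unimodular a b" "terminal_polygon P"
  shows "terminal_polygon (basis_map a b ` P)"
proof -
  have P: "lattice_polygon P" "0 \<in> interior P"
    "{v \<in> P. lattice_pt v} = {v. v extreme_point_of P} \<union> {0}"
    using assms(2) unfolding terminal_polygon_def by auto
  have "0 \<in> interior (basis_map a b ` P)"
    using P(2) interior_bijective_linear_image[OF linear_basis_map bij_basis_map[OF assms(1)]]
    by (metis basis_map_zero image_eqI)
  moreover have "{v \<in> basis_map a b ` P. lattice_pt v} =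
      {v. v extreme_point_of (basis_map a b ` P)} \<union> {0}"
    unfolding lattice_points_basis_map[OF assms(1)] extreme_points_basis_map[OF assms(1)] P(3)
    by simp
  ultimately show ?thesis
    unfolding terminal_polygon_def using lattice_polygon_basis_map[OF assms(1) P(1)] by blast
qed

section \<open>Polar duality and the basic polygons\<close>

lemma convex_polar_dual: "convex (polar_dual X)"
proof -
  have "polar_dual X = (\<Inter>v\<in>X. {u. inner v u \<ge> -1})"
    by (simp add: polar_dual_def set_eq_iff inner_commute)
  then show ?thesis
    by (simp add: convex_INT convex_halfspace_ge)
qed

lemma polar_dual_convex_hull: "polar_dual (convex hull V) = polar_dual V"
proof (intro equalityI subsetI)
  fix u assume "u \<in> polar_dual V"
  then have "convex hull V \<subseteq> {v. inner u v \<ge> -1}"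
    by (intro hull_minimal) (auto simp: polar_dual_def convex_halfspace_ge)
  then show "u \<in> polar_dual (convex hull V)"
    unfolding polar_dual_def by blast
qed (use hull_subset[of V convex] in \<open>auto simp: polar_dual_def\<close>)

lemma zero_in_interior_polar_dual:
  assumes "finite V"
  shows "0 \<in> interior (polar_dual V)"
proof (rule interiorI)
  show "open (\<Inter>v\<in>V. {u. inner v u > -1})"
    using assms by (intro open_INT) (auto simp: open_halfspace_gt)
  show "(\<Inter>v\<in>V. {u. inner v u > -1}) \<subseteq> polar_dual V"
    by (simp add: polar_dual_def subset_iff inner_commute) (meson less_imp_le)
qed simp

lemma mem_polar_dual_iff: "(x, y) \<in> polar_dual W \<longleftrightarrow> (\<forall>(a, b)\<in>W. -1 \<le> x * a + y * b)"
  by (auto simp: polar_dual_def inner_real_def)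

lemma convex_hull_subset_polar_dual: "V \<subseteq> polar_dual W \<Longrightarrow> convex hull V \<subseteq> polar_dual W"
  by (simp add: hull_minimal convex_polar_dual)

lemma convex_combination_in_hull_3:
  assumes "0 \<le> a" "0 \<le> b" "0 \<le> c" "a + b + c = 1" "{p, q, r} \<subseteq> V"
    and "u = a *\<^sub>R p + b *\<^sub>R q + c *\<^sub>R r"
  shows "u \<in> convex hull V"
proof -
  have "a *\<^sub>R p + b *\<^sub>R q + c *\<^sub>R r \<in> convex hull {p, q, r}"
    unfolding convex_hull_3 using assms(1-4) by blast
  then show ?thesis
    using hull_mono[OF assms(5)] assms(6) by blast
qed

lemma lattice_polygon_convex_hull_lat:
  assumes "finite V" "interior (convex hull (lat ` V)) \<noteq> {}"
  shows "lattice_polygon (convex hull (lat ` V))"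
  unfolding lattice_polygon_def using assms by (intro conjI exI[of _ "lat ` V"]) auto

lemma reflexive_polygon_if_dual_pair:
  assumes "P = convex hull (lat ` V)" "Q = convex hull (lat ` W)" "finite V" "finite W"
    and "P = polar_dual Q" "Q = polar_dual P"
  shows "reflexive_polygon P"
proof -
  have "0 \<in> interior P"
    unfolding assms(5,2) polar_dual_convex_hull using assms(4) by (simp add: zero_in_interior_polar_dual)
  moreover have "0 \<in> interior Q"
    unfolding assms(6,1) polar_dual_convex_hull using assms(3) by (simp add: zero_in_interior_polar_dual)
  ultimately have "lattice_polygon P" "lattice_polygon Q"
    using assms(1-4) lattice_polygon_convex_hull_lat by auto
  then show ?thesis
    unfolding reflexive_polygon_def using \<open>0 \<in> interior P\<close> assms(6) by simp
qed

lemma extreme_point_of_convex_hull_if_separated: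
  assumes "finite V" "v \<in> V" "\<forall>w\<in>V - {v}. inner c w \<le> k" "inner c v > k"
  shows "v extreme_point_of convex hull V"
proof -
  have "convex hull (V - {v}) \<subseteq> {x. inner c x \<le> k}"
    using assms(3) by (intro hull_minimal) (auto simp: convex_halfspace_le)
  then have "v \<notin> convex hull (V - {v})"
    using assms(4) by auto
  then have "v extreme_point_of convex hull (insert v (V - {v}))"
    using assms(1) by (intro extreme_point_of_convex_hull_insert) auto
  then show ?thesis
    using assms(2) by (simp add: insert_absorb)
qed

lemma terminal_polygon_if_dual_pair:
  assumes "P = convex hull (lat ` V)" "Q = convex hull (lat ` W)" "finite V" "finite W"
    and "P = polar_dual Q" "Q = polar_dual P"
    and "\<forall>v\<in>V. lat v extreme_point_of P"
    and "\<forall>z. lat z \<in> P \<longrightarrow> z \<in> V \<or> z = 0"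
  shows "terminal_polygon P"
proof -
  have refl: "reflexive_polygon P"
    using reflexive_polygon_if_dual_pair[OF assms(1-6)] .
  have "0 \<in> P"
    using refl interior_subset unfolding reflexive_polygon_def by blast
  then have "{v \<in> P. lattice_pt v} = lat ` V \<union> {0}"
  proof (intro equalityI subsetI)
    fix v assume "v \<in> {v \<in> P. lattice_pt v}"
    then obtain z where "v = lat z" "lat z \<in> P"
      by (auto simp: lattice_pt_iff)
    then show "v \<in> lat ` V \<union> {0}"
      using assms(8)[rule_format, of z] by auto
  qed (use assms(1) hull_subset[of "lat ` V"] lattice_pt_lat[of 0] in auto)
  moreover have "{v. v extreme_point_of P} = lat ` V"
    using assms(1,7) extreme_point_of_convex_hull by blast
  ultimately show ?thesis
    using refl unfolding reflexive_polygon_def terminal_polygon_def by auto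
qed

definition triangle :: "int \<times> int \<Rightarrow> int \<times> int \<Rightarrow> (real \<times> real) set" where
  "triangle a b = convex hull (lat ` {a, b, -a-b})"

definition big_triangle :: "int \<times> int \<Rightarrow> int \<times> int \<Rightarrow> (real \<times> real) set" where
  "big_triangle a b = convex hull (lat ` {-a-b, a+a-b, -a+b+b})"

definition square :: "int \<times> int \<Rightarrow> int \<times> int \<Rightarrow> (real \<times> real) set" where
  "square a b = convex hull (lat ` {a, b, -a, -b})"

definition skew_triangle :: "int \<times> int \<Rightarrow> int \<times> int \<Rightarrow> (real \<times> real) set" where
  "skew_triangle a b = convex hull (lat ` {a, b, -a-b-b})"

definition hexagon :: "int \<times> int \<Rightarrow> int \<times> int \<Rightarrow> (real \<times> real) set" where
  "hexagon a b = convex hull (lat ` {a, a+b, b, -a, -a-b, -b})"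

lemma triangle_std: "triangle (1,0) (0,1) = convex hull {(1,0), (0,1), (-1,-1)}"
  by (simp add: triangle_def lat_def)

lemma big_triangle_std: "big_triangle (1,0) (0,1) = convex hull {(-1,-1), (2,-1), (-1,2)}"
  by (simp add: big_triangle_def lat_def)

lemma square_std: "square (1,0) (0,1) = convex hull {(1,0), (0,1), (-1,0), (0,-1)}"
  by (simp add: square_def lat_def)

lemma square_diag: "square (1,1) (-1,1) = convex hull {(1,1), (-1,1), (-1,-1), (1,-1)}"
  by (simp add: square_def lat_def)

lemma skew_triangle_std: "skew_triangle (1,0) (0,1) = convex hull {(1,0), (0,1), (-1,-2)}"
  by (simp add: skew_triangle_def lat_def)

lemma skew_triangle_dual: "skew_triangle (3,-1) (-1,1) = convex hull {(3,-1), (-1,1), (-1,-1)}"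
  by (simp add: skew_triangle_def lat_def)

lemma hexagon_std:
  "hexagon (1,0) (0,1) = convex hull {(1,0), (1,1), (0,1), (-1,0), (-1,-1), (0,-1)}"
  by (simp add: hexagon_def lat_def)

lemma hexagon_dual:
  "hexagon (1,0) (-1,1) = convex hull {(1,0), (0,1), (-1,1), (-1,0), (0,-1), (1,-1)}"
  by (simp add: hexagon_def lat_def)

lemma convex_hull_eq_polar_dualI:
  fixes V W :: "(real \<times> real) set"
  assumes "\<And>x y. (\<And>a b. (a, b) \<in> W \<Longrightarrow> -1 \<le> x * a + y * b) \<Longrightarrow> (x, y) \<in> convex hull V"
    and "\<And>v w. v \<in> V \<Longrightarrow> w \<in> W \<Longrightarrow> -1 \<le> inner v w"
  shows "convex hull V = polar_dual (convex hull W)"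
proof
  show "convex hull V \<subseteq> polar_dual (convex hull W)"
    unfolding polar_dual_convex_hull using assms(2)
    by (intro convex_hull_subset_polar_dual) (auto simp: polar_dual_def)
  show "polar_dual (convex hull W) \<subseteq> convex hull V"
  proof
    fix u assume "u \<in> polar_dual (convex hull W)"
    then show "u \<in> convex hull V"
      using assms(1)[of "fst u" "snd u"]
      by (cases u) (auto simp: polar_dual_convex_hull mem_polar_dual_iff)
  qed
qed

lemma triangle_eq_polar_dual: "triangle (1,0) (0,1) = polar_dual (big_triangle (1,0) (0,1))"
  unfolding triangle_std big_triangle_std
proof (rule convex_hull_eq_polar_dualI)
  fix x y :: real
  assume "\<And>a b. (a, b) \<in> {(-1,-1), (2,-1), (-1,2)} \<Longrightarrow> -1 \<le> x * a + y * b"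
  from this[of "-1" "-1"] this[of 2 "-1"] this[of "-1" 2]
  have h: "-x-y \<ge> -1" "2*x-y \<ge> -1" "-x+2*y \<ge> -1" by auto
  show "(x, y) \<in> convex hull {(1,0), (0,1), (-1,-1)}"
    by (rule convex_combination_in_hull_3[where a="x + (1-x-y)/3" and b="y + (1-x-y)/3"
          and c="(1-x-y)/3" and p="(1,0)" and q="(0,1)" and r="(-1,-1)"])
      (use h in \<open>auto simp: field_simps\<close>)
qed (auto simp: inner_Pair)

lemma big_triangle_eq_polar_dual: "big_triangle (1,0) (0,1) = polar_dual (triangle (1,0) (0,1))"
  unfolding big_triangle_std triangle_std
proof (rule convex_hull_eq_polar_dualI)
  fix x y :: real
  assume "\<And>a b. (a, b) \<in> {(1,0), (0,1), (-1,-1)} \<Longrightarrow> -1 \<le> x * a + y * b"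
  from this[of 1 0] this[of 0 1] this[of "-1" "-1"]
  have h: "x \<ge> -1" "y \<ge> -1" "-x-y \<ge> -1" by auto
  show "(x, y) \<in> convex hull {(-1,-1), (2,-1), (-1,2)}"
    by (rule convex_combination_in_hull_3[where a="(1-x-y)/3" and b="(x+1)/3" and c="(y+1)/3"
          and p="(-1,-1)" and q="(2,-1)" and r="(-1,2)"])
      (use h in \<open>auto simp: field_simps\<close>)
qed (auto simp: inner_Pair)

lemma square_eq_polar_dual: "square (1,0) (0,1) = polar_dual (square (1,1) (-1,1))"
  unfolding square_std square_diag
proof (rule convex_hull_eq_polar_dualI)
  fix x y :: real
  assume "\<And>a b. (a, b) \<in> {(1,1), (-1,1), (-1,-1), (1,-1)} \<Longrightarrow> -1 \<le> x * a + y * b"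
  from this[of 1 1] this[of "-1" 1] this[of "-1" "-1"] this[of 1 "-1"]
  have h: "x+y \<ge> -1" "-x+y \<ge> -1" "-x-y \<ge> -1" "x-y \<ge> -1" by auto
  show "(x, y) \<in> convex hull {(1,0), (0,1), (-1,0), (0,-1)}"
  proof (cases "x \<ge> 0")
    case True
    show ?thesis
      by (rule convex_combination_in_hull_3[where a="x" and b="(1-x+y)/2" and c="(1-x-y)/2"
            and p="(1,0)" and q="(0,1)" and r="(0,-1)"])
        (use h True in \<open>auto simp: field_simps\<close>)
  next
    case False
    show ?thesis
      by (rule convex_combination_in_hull_3[where a="-x" and b="(1+x+y)/2" and c="(1+x-y)/2"
            and p="(-1,0)" and q="(0,1)" and r="(0,-1)"])
        (use h False in \<open>auto simp: field_simps\<close>)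
  qed
qed (auto simp: inner_Pair)

lemma square_diag_eq_polar_dual: "square (1,1) (-1,1) = polar_dual (square (1,0) (0,1))"
  unfolding square_diag square_std
proof (rule convex_hull_eq_polar_dualI)
  fix x y :: real
  assume "\<And>a b. (a, b) \<in> {(1,0), (0,1), (-1,0), (0,-1)} \<Longrightarrow> -1 \<le> x * a + y * b"
  from this[of 1 0] this[of 0 1] this[of "-1" 0] this[of 0 "-1"]
  have h: "x \<ge> -1" "y \<ge> -1" "-x \<ge> -1" "-y \<ge> -1" by auto
  show "(x, y) \<in> convex hull {(1,1), (-1,1), (-1,-1), (1,-1)}"
  proof (cases "y \<ge> x")
    case True
    show ?thesis
      by (rule convex_combination_in_hull_3[where a="(x+1)/2" and b="(y-x)/2" and c="(1-y)/2"
            and p="(1,1)" and q="(-1,1)" and r="(-1,-1)"])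
        (use h True in \<open>auto simp: field_simps\<close>)
  next
    case False
    show ?thesis
      by (rule convex_combination_in_hull_3[where a="(y+1)/2" and b="(x-y)/2" and c="(1-x)/2"
            and p="(1,1)" and q="(1,-1)" and r="(-1,-1)"])
        (use h False in \<open>auto simp: field_simps\<close>)
  qed
qed (auto simp: inner_Pair)

lemma skew_triangle_eq_polar_dual: "skew_triangle (1,0) (0,1) = polar_dual (skew_triangle (3,-1) (-1,1))"
  unfolding skew_triangle_std skew_triangle_dual
proof (rule convex_hull_eq_polar_dualI)
  fix x y :: real
  assume "\<And>a b. (a, b) \<in> {(3,-1), (-1,1), (-1,-1)} \<Longrightarrow> -1 \<le> x * a + y * b"
  from this[of 3 "-1"] this[of "-1" 1] this[of "-1" "-1"]
  have h: "3*x-y \<ge> -1" "-x+y \<ge> -1" "-x-y \<ge> -1" by auto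
  show "(x, y) \<in> convex hull {(1,0), (0,1), (-1,-2)}"
    by (rule convex_combination_in_hull_3[where a="(1+3*x-y)/4" and b="(1-x+y)/2" and c="(1-x-y)/4"
          and p="(1,0)" and q="(0,1)" and r="(-1,-2)"])
      (use h in \<open>auto simp: field_simps\<close>)
qed (auto simp: inner_Pair)

lemma skew_triangle_dual_eq_polar_dual: "skew_triangle (3,-1) (-1,1) = polar_dual (skew_triangle (1,0) (0,1))"
  unfolding skew_triangle_dual skew_triangle_std
proof (rule convex_hull_eq_polar_dualI)
  fix x y :: real
  assume "\<And>a b. (a, b) \<in> {(1,0), (0,1), (-1,-2)} \<Longrightarrow> -1 \<le> x * a + y * b"
  from this[of 1 0] this[of 0 1] this[of "-1" "-2"]
  have h: "x \<ge> -1" "y \<ge> -1" "-x-2*y \<ge> -1" by auto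
  show "(x, y) \<in> convex hull {(3,-1), (-1,1), (-1,-1)}"
    by (rule convex_combination_in_hull_3[where a="(1-x-2*y)/4" and b="(x+1)/4" and c="(y+1)/2"
          and p="(-1,-1)" and q="(3,-1)" and r="(-1,1)"])
      (use h in \<open>auto simp: field_simps\<close>)
qed (auto simp: inner_Pair)

lemma hexagon_eq_polar_dual: "hexagon (1,0) (0,1) = polar_dual (hexagon (1,0) (-1,1))"
  unfolding hexagon_std hexagon_dual
proof (rule convex_hull_eq_polar_dualI)
  fix x y :: real
  assume "\<And>a b. (a, b) \<in> {(1,0), (0,1), (-1,1), (-1,0), (0,-1), (1,-1)} \<Longrightarrow> -1 \<le> x * a + y * b"
  from this[of 1 0] this[of 0 1] this[of "-1" 1] this[of "-1" 0] this[of 0 "-1"] this[of 1 "-1"]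
  have h: "x \<ge> -1" "y \<ge> -1" "-x+y \<ge> -1" "-x \<ge> -1" "-y \<ge> -1" "x-y \<ge> -1" by auto
  consider "x + y \<ge> 1" | "x + y \<le> 1" "y \<ge> 0" | "y \<le> 0" "x - 2*y \<le> 1" | "x - 2*y \<ge> 1"
    by linarith
  then show "(x, y) \<in> convex hull {(1,0), (1,1), (0,1), (-1,0), (-1,-1), (0,-1)}"
  proof cases
    case 1
    show ?thesis
      by (rule convex_combination_in_hull_3[where a="1-y" and b="x+y-1" and c="1-x"
            and p="(1,0)" and q="(1,1)" and r="(0,1)"])
        (use h 1 in \<open>auto simp: field_simps\<close>)
  next
    case 2
    show ?thesis
      by (rule convex_combination_in_hull_3[where a="(1-y+x)/2" and b="y" and c="(1-y-x)/2"
            and p="(1,0)" and q="(0,1)" and r="(-1,0)"])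
        (use h 2 in \<open>auto simp: field_simps\<close>)
  next
    case 3
    show ?thesis
      by (rule convex_combination_in_hull_3[where a="(1+x)/2" and b="(1-x+2*y)/2" and c="-y"
            and p="(1,0)" and q="(-1,0)" and r="(-1,-1)"])
        (use h 3 in \<open>auto simp: field_simps\<close>)
  next
    case 4
    show ?thesis
      by (rule convex_combination_in_hull_3[where a="1+y" and b="1+y-x" and c="x-1-2*y"
            and p="(1,0)" and q="(-1,-1)" and r="(0,-1)"])
        (use h 4 in \<open>auto simp: field_simps\<close>)
  qed
qed (auto simp: inner_Pair)

lemma hexagon_dual_eq_polar_dual: "hexagon (1,0) (-1,1) = polar_dual (hexagon (1,0) (0,1))"
  unfolding hexagon_dual hexagon_std
proof (rule convex_hull_eq_polar_dualI)
  fix x y :: real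
  assume "\<And>a b. (a, b) \<in> {(1,0), (1,1), (0,1), (-1,0), (-1,-1), (0,-1)} \<Longrightarrow> -1 \<le> x * a + y * b"
  from this[of 1 0] this[of 1 1] this[of 0 1] this[of "-1" 0] this[of "-1" "-1"] this[of 0 "-1"]
  have h: "x \<ge> -1" "x+y \<ge> -1" "y \<ge> -1" "-x \<ge> -1" "-x-y \<ge> -1" "-y \<ge> -1" by auto
  consider "x + 2*y \<ge> 1" | "x + 2*y \<le> 1" "y \<ge> 0" | "y \<le> 0" "x - y \<le> 1" | "x - y \<ge> 1"
    by linarith
  then show "(x, y) \<in> convex hull {(1,0), (0,1), (-1,1), (-1,0), (0,-1), (1,-1)}"
  proof cases
    case 1
    show ?thesis
      by (rule convex_combination_in_hull_3[where a="1-y" and b="2*y+x-1" and c="1-y-x"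
            and p="(1,0)" and q="(0,1)" and r="(-1,1)"])
        (use h 1 in \<open>auto simp: field_simps\<close>)
  next
    case 2
    show ?thesis
      by (rule convex_combination_in_hull_3[where a="(1+x)/2" and b="y" and c="(1-x-2*y)/2"
            and p="(1,0)" and q="(-1,1)" and r="(-1,0)"])
        (use h 2 in \<open>auto simp: field_simps\<close>)
  next
    case 3
    show ?thesis
      by (rule convex_combination_in_hull_3[where a="(1+y+x)/2" and b="(1+y-x)/2" and c="-y"
            and p="(1,0)" and q="(-1,0)" and r="(0,-1)"])
        (use h 3 in \<open>auto simp: field_simps\<close>)
  next
    case 4
    show ?thesis
      by (rule convex_combination_in_hull_3[where a="1+y" and b="1-x" and c="x-1-y"
            and p="(1,0)" and q="(0,-1)" and r="(1,-1)"])
        (use h 4 in \<open>auto simp: field_simps\<close>)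
  qed
qed (auto simp: inner_Pair)

lemma triangle_basis_map: "triangle a b = basis_map a b ` triangle (1,0) (0,1)"
  unfolding triangle_std convex_hull_linear_image[OF linear_basis_map] triangle_def
  by (simp add: basis_map_def lat_def)

lemma big_triangle_basis_map: "big_triangle a b = basis_map a b ` big_triangle (1,0) (0,1)"
  unfolding big_triangle_std convex_hull_linear_image[OF linear_basis_map] big_triangle_def
  by (simp add: basis_map_def lat_def)

lemma square_basis_map: "square a b = basis_map a b ` square (1,0) (0,1)"
  unfolding square_std convex_hull_linear_image[OF linear_basis_map] square_def
  by (simp add: basis_map_def lat_def)

lemma skew_triangle_basis_map: "skew_triangle a b = basis_map a b ` skew_triangle (1,0) (0,1)"
  unfolding skew_triangle_std convex_hull_linear_image[OF linear_basis_map] skew_triangle_def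
  by (simp add: basis_map_def lat_def algebra_simps)

lemma hexagon_basis_map: "hexagon a b = basis_map a b ` hexagon (1,0) (0,1)"
  unfolding hexagon_std convex_hull_linear_image[OF linear_basis_map] hexagon_def
  by (simp add: basis_map_def lat_def)

lemma int_pair_in_unit_box:
  assumes "-1 \<le> real_of_int i" "real_of_int i \<le> 1" "-1 \<le> real_of_int j" "real_of_int j \<le> 1"
  shows "(i, j) \<in> {(-1,-1), (-1,0), (-1,1), (0,-1), (0,0), (0,1), (1,-1), (1,0), (1,1)}"
proof -
  have "i \<in> {-1, 0, 1}" "j \<in> {-1, 0, 1}"
    using assms by auto
  then show ?thesis by auto
qed

lemma terminal_triangle_std: "terminal_polygon (triangle (1,0) (0,1))"
proof (rule terminal_polygon_if_dual_pair[OF triangle_def big_triangle_def _ _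
      triangle_eq_polar_dual big_triangle_eq_polar_dual])
  show "\<forall>v\<in>{(1,0), (0,1), -(1,0)-(0,1)}. lat v extreme_point_of triangle (1,0) (0,1)"
  proof
    fix v :: "int \<times> int" assume "v \<in> {(1,0), (0,1), -(1,0)-(0,1)}"
    then show "lat v extreme_point_of triangle (1,0) (0,1)"
      unfolding triangle_std
      by (intro extreme_point_of_convex_hull_if_separated[where c = "lat v" and k = 0])
        (auto simp: lat_def)
  qed
  show "\<forall>z. lat z \<in> triangle (1,0) (0,1) \<longrightarrow> z \<in> {(1,0), (0,1), -(1,0)-(0,1)} \<or> z = 0"
  proof (intro allI impI)
    fix z assume "lat z \<in> triangle (1,0) (0,1)"
    moreover obtain i j where z: "z = (i, j)" by (cases z)
    ultimately have h: "- of_int i - of_int j \<ge> (-1::real)" "2 * of_int i - of_int j \<ge> (-1::real)"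
      "- of_int i + 2 * of_int j \<ge> (-1::real)"
      unfolding triangle_eq_polar_dual big_triangle_std polar_dual_convex_hull
      by (auto simp: lat_def mem_polar_dual_iff)
    then have "(i, j) \<in> {(-1,-1), (-1,0), (-1,1), (0,-1), (0,0), (0,1), (1,-1), (1,0), (1,1)}"
      by (intro int_pair_in_unit_box) argo+
    then show "z \<in> {(1,0), (0,1), -(1,0)-(0,1)} \<or> z = 0"
      using h by (auto simp: z zero_prod_def)
  qed
qed auto

lemma terminal_square_std: "terminal_polygon (square (1,0) (0,1))"
proof (rule terminal_polygon_if_dual_pair[OF square_def square_def _ _
      square_eq_polar_dual square_diag_eq_polar_dual])
  show "\<forall>v\<in>{(1,0), (0,1), -(1,0), -(0,1)}. lat v extreme_point_of square (1,0) (0,1)"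
  proof
    fix v :: "int \<times> int" assume "v \<in> {(1,0), (0,1), -(1,0), -(0,1)}"
    then show "lat v extreme_point_of square (1,0) (0,1)"
      unfolding square_std
      by (intro extreme_point_of_convex_hull_if_separated[where c = "lat v" and k = 0])
        (auto simp: lat_def)
  qed
  show "\<forall>z. lat z \<in> square (1,0) (0,1) \<longrightarrow> z \<in> {(1,0), (0,1), -(1,0), -(0,1)} \<or> z = 0"
  proof (intro allI impI)
    fix z assume "lat z \<in> square (1,0) (0,1)"
    moreover obtain i j where z: "z = (i, j)" by (cases z)
    ultimately have h: "of_int i + of_int j \<ge> (-1::real)" "- of_int i + of_int j \<ge> (-1::real)"
      "- of_int i - of_int j \<ge> (-1::real)" "of_int i - of_int j \<ge> (-1::real)"
      unfolding square_eq_polar_dual square_diag polar_dual_convex_hull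
      by (auto simp: lat_def mem_polar_dual_iff)
    then have "(i, j) \<in> {(-1,-1), (-1,0), (-1,1), (0,-1), (0,0), (0,1), (1,-1), (1,0), (1,1)}"
      by (intro int_pair_in_unit_box) argo+
    then show "z \<in> {(1,0), (0,1), -(1,0), -(0,1)} \<or> z = 0"
      using h by (auto simp: z zero_prod_def)
  qed
qed auto

lemma terminal_hexagon_std: "terminal_polygon (hexagon (1,0) (0,1))"
proof (rule terminal_polygon_if_dual_pair[OF hexagon_def hexagon_def _ _
      hexagon_eq_polar_dual hexagon_dual_eq_polar_dual])
  show "\<forall>v\<in>{(1,0), (1,0)+(0,1), (0,1), -(1,0), -(1,0)-(0,1), -(0,1)}.
      lat v extreme_point_of hexagon (1,0) (0,1)"
  proof
    fix v :: "int \<times> int" assume "v \<in> {(1,0), (1,0)+(0,1), (0,1), -(1,0), -(1,0)-(0,1), -(0,1)}"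
    then show "lat v extreme_point_of hexagon (1,0) (0,1)"
      unfolding hexagon_std
      \<comment> \<open>all vertices solve x^2 - x y + y^2 = 1, and c is the gradient of this form\<close>
      by (intro extreme_point_of_convex_hull_if_separated[where k = 1
            and c = "(2 * fst (lat v) - snd (lat v), 2 * snd (lat v) - fst (lat v))"])
        (auto simp: lat_def)
  qed
  show "\<forall>z. lat z \<in> hexagon (1,0) (0,1) \<longrightarrow>
      z \<in> {(1,0), (1,0)+(0,1), (0,1), -(1,0), -(1,0)-(0,1), -(0,1)} \<or> z = 0"
  proof (intro allI impI)
    fix z assume "lat z \<in> hexagon (1,0) (0,1)"
    moreover obtain i j where z: "z = (i, j)" by (cases z)
    ultimately have h: "of_int i \<ge> (-1::real)" "of_int j \<ge> (-1::real)"
      "- of_int i + of_int j \<ge> (-1::real)" "- of_int i \<ge> (-1::real)" "- of_int j \<ge> (-1::real)"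
      "of_int i - of_int j \<ge> (-1::real)"
      unfolding hexagon_eq_polar_dual hexagon_dual polar_dual_convex_hull
      by (auto simp: lat_def mem_polar_dual_iff)
    then have "(i, j) \<in> {(-1,-1), (-1,0), (-1,1), (0,-1), (0,0), (0,1), (1,-1), (1,0), (1,1)}"
      by (intro int_pair_in_unit_box) argo+
    then show "z \<in> {(1,0), (1,0)+(0,1), (0,1), -(1,0), -(1,0)-(0,1), -(0,1)} \<or> z = 0"
      using h by (auto simp: z zero_prod_def)
  qed
qed auto

lemma reflexive_basic_polygons:
  assumes "unimodular a b"
  shows "reflexive_polygon (triangle a b)" "reflexive_polygon (big_triangle a b)"
    "reflexive_polygon (square a b)" "reflexive_polygon (skew_triangle a b)"
    "reflexive_polygon (hexagon a b)"
proof -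
  have "reflexive_polygon (triangle (1,0) (0,1))"
    by (rule reflexive_polygon_if_dual_pair[OF triangle_def big_triangle_def _ _
          triangle_eq_polar_dual big_triangle_eq_polar_dual]) auto
  moreover have "reflexive_polygon (big_triangle (1,0) (0,1))"
    by (rule reflexive_polygon_if_dual_pair[OF big_triangle_def triangle_def _ _
          big_triangle_eq_polar_dual triangle_eq_polar_dual]) auto
  moreover have "reflexive_polygon (square (1,0) (0,1))"
    by (rule reflexive_polygon_if_dual_pair[OF square_def square_def _ _
          square_eq_polar_dual square_diag_eq_polar_dual]) auto
  moreover have "reflexive_polygon (skew_triangle (1,0) (0,1))"
    by (rule reflexive_polygon_if_dual_pair[OF skew_triangle_def skew_triangle_def _ _
          skew_triangle_eq_polar_dual skew_triangle_dual_eq_polar_dual]) auto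
  moreover have "reflexive_polygon (hexagon (1,0) (0,1))"
    by (rule reflexive_polygon_if_dual_pair[OF hexagon_def hexagon_def _ _
          hexagon_eq_polar_dual hexagon_dual_eq_polar_dual]) auto
  ultimately show "reflexive_polygon (triangle a b)" "reflexive_polygon (big_triangle a b)"
    "reflexive_polygon (square a b)" "reflexive_polygon (skew_triangle a b)"
    "reflexive_polygon (hexagon a b)"
    unfolding triangle_basis_map[of a b] big_triangle_basis_map[of a b] square_basis_map[of a b]
      skew_triangle_basis_map[of a b] hexagon_basis_map[of a b]
    by (simp_all add: reflexive_polygon_basis_map[OF assms])
qed

lemma terminal_basic_polygons:
  assumes "unimodular a b"
  shows "terminal_polygon (triangle a b)" "terminal_polygon (square a b)"
    "terminal_polygon (hexagon a b)"
  unfolding triangle_basis_map[of a b] square_basis_map[of a b] hexagon_basis_map[of a b]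
  using terminal_polygon_basis_map[OF assms] terminal_triangle_std terminal_square_std
    terminal_hexagon_std
  by simp_all

section \<open>Zigzags of inclusions\<close>

definition zigzag :: "('a set \<Rightarrow> bool) \<Rightarrow> 'a set \<Rightarrow> 'a set \<Rightarrow> bool" where
  "zigzag G X Y \<longleftrightarrow> (\<exists>(k::nat) (Q::nat \<Rightarrow> 'a set).
     Q 0 = X \<and> Q k = Y \<and> (\<forall>i\<le>k. G (Q i)) \<and> (\<forall>i<k. Q i \<subseteq> Q (Suc i) \<or> Q (Suc i) \<subseteq> Q i))"

lemma zigzag_refl: "G X \<Longrightarrow> zigzag G X X"
  unfolding zigzag_def by (intro exI[of _ 0] exI[of _ "\<lambda>_. X"]) auto

lemma zigzag_subset: "G X \<Longrightarrow> G Y \<Longrightarrow> X \<subseteq> Y \<Longrightarrow> zigzag G X Y"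
  unfolding zigzag_def
  by (intro exI[of _ 1] exI[of _ "\<lambda>i. if i = 0 then X else Y"]) (auto simp: le_Suc_eq)

lemma zigzag_sym:
  assumes "zigzag G X Y"
  shows "zigzag G Y X"
proof -
  obtain k Q where Q: "Q 0 = X" "Q k = Y" "\<forall>i\<le>k. G (Q i)"
    "\<forall>i<k. Q i \<subseteq> Q (Suc i) \<or> Q (Suc i) \<subseteq> Q i"
    using assms unfolding zigzag_def by blast
  define Q' where "Q' i = Q (k - i)" for i
  have "Q' 0 = Y" "Q' k = X" "\<forall>i\<le>k. G (Q' i)"
    using Q by (auto simp: Q'_def)
  moreover have "\<forall>i<k. Q' i \<subseteq> Q' (Suc i) \<or> Q' (Suc i) \<subseteq> Q' i"
  proof (intro allI impI)
    fix i assume "i < k"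
    then have "k - i = Suc (k - Suc i)" "k - Suc i < k" by auto
    then show "Q' i \<subseteq> Q' (Suc i) \<or> Q' (Suc i) \<subseteq> Q' i"
      using Q(4) unfolding Q'_def by metis
  qed
  ultimately show ?thesis
    unfolding zigzag_def by blast
qed

lemma zigzag_supset: "G X \<Longrightarrow> G Y \<Longrightarrow> Y \<subseteq> X \<Longrightarrow> zigzag G X Y"
  by (rule zigzag_sym[OF zigzag_subset])

lemma zigzag_trans:
  assumes "zigzag G X Y" "zigzag G Y Z"
  shows "zigzag G X Z"
proof -
  obtain k1 Q1 where Q1: "Q1 0 = X" "Q1 k1 = Y" "\<forall>i\<le>k1. G (Q1 i)"
    "\<forall>i<k1. Q1 i \<subseteq> Q1 (Suc i) \<or> Q1 (Suc i) \<subseteq> Q1 i"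
    using assms(1) unfolding zigzag_def by blast
  obtain k2 Q2 where Q2: "Q2 0 = Y" "Q2 k2 = Z" "\<forall>i\<le>k2. G (Q2 i)"
    "\<forall>i<k2. Q2 i \<subseteq> Q2 (Suc i) \<or> Q2 (Suc i) \<subseteq> Q2 i"
    using assms(2) unfolding zigzag_def by blast
  define Q where "Q i = (if i \<le> k1 then Q1 i else Q2 (i - k1))" for i
  have "Q 0 = X" "Q (k1 + k2) = Z" "\<forall>i\<le>k1+k2. G (Q i)"
    using Q1 Q2 by (auto simp: Q_def)
  moreover have "\<forall>i<k1+k2. Q i \<subseteq> Q (Suc i) \<or> Q (Suc i) \<subseteq> Q i"
  proof (intro allI impI)
    fix i assume i: "i < k1 + k2"
    show "Q i \<subseteq> Q (Suc i) \<or> Q (Suc i) \<subseteq> Q i"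
    proof (cases "i < k1")
      case True
      then show ?thesis using Q1(4) by (auto simp: Q_def)
    next
      case False
      then have "Q i = Q2 (i - k1)" "Q (Suc i) = Q2 (Suc (i - k1))" "i - k1 < k2"
        using i Q1(2) Q2(1) by (auto simp: Q_def Suc_diff_le)
      then show ?thesis using Q2(4) by metis
    qed
  qed
  ultimately show ?thesis
    unfolding zigzag_def by blast
qed

lemma square_swap: "square a b = square b a"
  unfolding square_def by (simp add: insert_commute)

lemma square_uminus_left: "square (-a) b = square a b"
  unfolding square_def by (simp add: insert_commute)

lemma square_uminus_right: "square a (-b) = square a b"
  unfolding square_def by (simp add: insert_commute)

lemma square_subset_hexagon: "square a b \<subseteq> hexagon a b"
  unfolding square_def hexagon_def by (rule hull_mono) auto

lemma square_shear_subset_hexagon: "square a (b + a) \<subseteq> hexagon a b"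
  unfolding square_def hexagon_def by (rule hull_mono) (auto simp: algebra_simps)

lemma triangle_subset_hexagon: "triangle a b \<subseteq> hexagon a b"
  unfolding triangle_def hexagon_def by (rule hull_mono) auto

lemma triangle_subset_big_triangle: "triangle a b \<subseteq> big_triangle a b"
  unfolding triangle_def big_triangle_def
proof (intro hull_minimal convex_convex_hull)
  let ?V = "lat ` {-a-b, a+a-b, -a+b+b}"
  have "lat a \<in> convex hull ?V"
    by (rule convex_combination_in_hull_3[where a = 0 and b = "2/3" and c = "1/3"
          and p = "lat (-a-b)" and q = "lat (a+a-b)" and r = "lat (-a+b+b)"])
      (auto simp: lat_def prod_eq_iff field_simps)
  moreover have "lat b \<in> convex hull ?V"
    by (rule convex_combination_in_hull_3[where a = 0 and b = "1/3" and c = "2/3"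
          and p = "lat (-a-b)" and q = "lat (a+a-b)" and r = "lat (-a+b+b)"])
      (auto simp: lat_def prod_eq_iff field_simps)
  moreover have "lat (-a-b) \<in> convex hull ?V"
    by (rule hull_inc) auto
  ultimately show "lat ` {a, b, -a-b} \<subseteq> convex hull ?V"
    by auto
qed

lemma skew_triangle_subset_big_triangle: "skew_triangle a b \<subseteq> big_triangle (a + b) b"
  unfolding skew_triangle_def big_triangle_def
proof (intro hull_minimal convex_convex_hull)
  let ?V = "lat ` {-(a+b)-b, (a+b)+(a+b)-b, -(a+b)+b+b}"
  have "lat a \<in> convex hull ?V"
    by (rule convex_combination_in_hull_3[where a = "1/3" and b = "2/3" and c = 0
          and p = "lat (-(a+b)-b)" and q = "lat ((a+b)+(a+b)-b)" and r = "lat (-(a+b)+b+b)"])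
      (auto simp: lat_def prod_eq_iff field_simps)
  moreover have "lat b \<in> convex hull ?V"
    by (rule convex_combination_in_hull_3[where a = 0 and b = "1/3" and c = "2/3"
          and p = "lat (-(a+b)-b)" and q = "lat ((a+b)+(a+b)-b)" and r = "lat (-(a+b)+b+b)"])
      (auto simp: lat_def prod_eq_iff field_simps)
  moreover have "lat (-a-b-b) \<in> convex hull ?V"
    by (rule hull_inc) (auto simp: algebra_simps)
  ultimately show "lat ` {a, b, -a-b-b} \<subseteq> convex hull ?V"
    by auto
qed

lemma zigzag_square_shear:
  assumes G: "\<forall>a b. unimodular a b \<longrightarrow> G (square a b) \<and> G (hexagon a b)"
    and "unimodular a b"
  shows "zigzag G (square a b) (square a (b + iscale c a))"
proof (induction c rule: int_induct[where k = 0])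
  case base
  have "G (square a b)"
    using G assms(2) by blast
  then show ?case
    by (simp add: iscale_def zigzag_refl flip: zero_prod_def)
next
  have step: "zigzag G (square a b') (square a (b' + a))" if "unimodular a b'" for b'
  proof -
    have "unimodular a (b' + a)"
      using unimodular_shear[OF that, of 1] by (simp add: iscale_def)
    then have "G (square a b')" "G (hexagon a b')" "G (square a (b' + a))"
      using G that by blast+
    then show ?thesis
      by (meson square_shear_subset_hexagon square_subset_hexagon zigzag_subset zigzag_sym
          zigzag_trans)
  qed
  have iscale_succ: "b + iscale (i + 1) a = (b + iscale i a) + a" for i
    by (simp add: iscale_def prod_eq_iff algebra_simps)
  {
    case (step1 i)
    then show ?case
      using step[OF unimodular_shear[OF assms(2)], of i] zigzag_trans by (metis iscale_succ)
  next
    case (step2 i)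
    then show ?case
      using step[OF unimodular_shear[OF assms(2)], of "i - 1"] iscale_succ[of "i - 1"]
      by (metis diff_add_cancel zigzag_sym zigzag_trans)
  }
qed

lemma zigzag_square_std_if_fst_zero:
  assumes G: "\<forall>a b. unimodular a b \<longrightarrow> G (square a b) \<and> G (hexagon a b)"
    and uni: "unimodular a b" and b0: "fst b = 0"
  shows "zigzag G (square a b) (square (1,0) (0,1))"
proof -
  have "fst a * snd b = 1 \<or> fst a * snd b = -1"
    using uni b0 by (auto simp: unimodular_def det2_def)
  then have fa: "fst a = 1 \<or> fst a = -1" and sb: "snd b = 1 \<or> snd b = -1"
    by (auto simp: zmult_eq_1_iff zmult_eq_neg1_iff)
  obtain a' where a': "fst a' = 1" "square a b = square a' b"
  proof (cases "fst a = 1")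
    case False
    then show ?thesis
      using that[of "-a"] fa square_uminus_left[of a b] by simp
  qed (use that in blast)
  obtain b' where b': "b' = (0,1)" "square a' b = square a' b'"
  proof (cases "snd b = 1")
    case True
    then show ?thesis
      using that[of b] b0 by (simp add: prod_eq_iff)
  next
    case False
    then show ?thesis
      using that[of "-b"] b0 sb square_uminus_right[of a' b] by (simp add: prod_eq_iff)
  qed
  have "unimodular (0,1) (1,0)"
    by (simp add: unimodular_def det2_def)
  moreover have "a' = (1,0) + iscale (snd a') (0,1)"
    using a'(1) by (simp add: iscale_def prod_eq_iff)
  ultimately have "zigzag G (square (0,1) (1,0)) (square (0,1) a')"
    using zigzag_square_shear[OF G] by metis
  then show ?thesis
    using a'(2) b' square_swap zigzag_sym by metis
qed

lemma exists_abs_add_mult_less: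
  fixes x y :: int
  assumes "x \<noteq> 0" "\<bar>x\<bar> \<le> \<bar>y\<bar>"
  obtains c where "\<bar>y + c * x\<bar> < \<bar>y\<bar>"
proof (cases "(x > 0) = (y > 0)")
  case True
  then have "\<bar>y + (-1) * x\<bar> < \<bar>y\<bar>"
    using assms by (auto simp: abs_if)
  then show ?thesis using that by blast
next
  case False
  then have "\<bar>y + 1 * x\<bar> < \<bar>y\<bar>"
    using assms by (auto simp: abs_if)
  then show ?thesis using that by blast
qed

text \<open>Euclidean algorithm on the first coordinates of the basis.\<close>

lemma zigzag_square_std:
  assumes G: "\<forall>a b. unimodular a b \<longrightarrow> G (square a b) \<and> G (hexagon a b)"
  shows "unimodular a b \<Longrightarrow> zigzag G (square a b) (square (1,0) (0,1))"
proof (induction "nat (\<bar>fst a\<bar> + \<bar>fst b\<bar>)" arbitrary: a b rule: less_induct)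
  case less
  have reduce: "zigzag G (square x y) (square (1,0) (0,1))"
    if uni: "unimodular x y" and sum: "\<bar>fst x\<bar> + \<bar>fst y\<bar> = \<bar>fst a\<bar> + \<bar>fst b\<bar>"
      and y0: "fst y \<noteq> 0" and le: "\<bar>fst y\<bar> \<le> \<bar>fst x\<bar>" for x y
  proof -
    obtain c where c: "\<bar>fst x + c * fst y\<bar> < \<bar>fst x\<bar>"
      using exists_abs_add_mult_less[OF y0 le] .
    define x' where "x' = x + iscale c y"
    have "zigzag G (square y x) (square y x')"
      unfolding x'_def by (rule zigzag_square_shear[OF G unimodular_swap[OF uni]])
    moreover have "unimodular x' y"
      unfolding x'_def using unimodular_swap unimodular_shear uni by blast
    moreover have "nat (\<bar>fst x'\<bar> + \<bar>fst y\<bar>) < nat (\<bar>fst a\<bar> + \<bar>fst b\<bar>)"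
      using c sum by (simp add: x'_def iscale_def)
    ultimately show ?thesis
      using less.hyps square_swap zigzag_trans by metis
  qed
  consider "fst b = 0" | "fst a = 0" | "fst a \<noteq> 0" "fst b \<noteq> 0" "\<bar>fst b\<bar> \<le> \<bar>fst a\<bar>"
    | "fst a \<noteq> 0" "fst b \<noteq> 0" "\<bar>fst a\<bar> \<le> \<bar>fst b\<bar>"
    by linarith
  then show ?case
  proof cases
    case 1
    then show ?thesis
      using zigzag_square_std_if_fst_zero[OF G less.prems] by blast
  next
    case 2
    then show ?thesis
      using zigzag_square_std_if_fst_zero[OF G unimodular_swap[OF less.prems]] square_swap by metis
  next
    case 3
    then show ?thesis
      using reduce[OF less.prems] by blast
  next
    case 4
    then show ?thesis
      using reduce[OF unimodular_swap[OF less.prems]] square_swap by (metis add.commute)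
  qed
qed

lemma zigzag_triangle_std:
  assumes G: "\<forall>a b. unimodular a b \<longrightarrow> G (triangle a b) \<and> G (square a b) \<and> G (hexagon a b)"
    and uni: "unimodular a b"
  shows "zigzag G (triangle a b) (square (1,0) (0,1))"
proof -
  have g: "G (triangle a b)" "G (square a b)" "G (hexagon a b)"
    using G uni by blast+
  have G': "\<forall>a b. unimodular a b \<longrightarrow> G (square a b) \<and> G (hexagon a b)"
    using G by blast
  have "zigzag G (triangle a b) (hexagon a b)"
    by (rule zigzag_subset[OF g(1,3) triangle_subset_hexagon])
  moreover have "zigzag G (hexagon a b) (square a b)"
    by (rule zigzag_supset[OF g(3,2) square_subset_hexagon])
  moreover have "zigzag G (square a b) (square (1,0) (0,1))"
    by (rule zigzag_square_std[OF G' uni])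
  ultimately show ?thesis
    using zigzag_trans by metis
qed

lemma zigzag_skew_triangle_std:
  assumes "unimodular a b"
  shows "zigzag reflexive_polygon (skew_triangle a b) (square (1,0) (0,1))"
proof -
  have uni': "unimodular (a + b) b"
    using assms by (auto simp: unimodular_def det2_def algebra_simps)
  have "zigzag reflexive_polygon (skew_triangle a b) (big_triangle (a + b) b)"
    using reflexive_basic_polygons(4)[OF assms] reflexive_basic_polygons(2)[OF uni']
      skew_triangle_subset_big_triangle by (rule zigzag_subset)
  moreover have "zigzag reflexive_polygon (big_triangle (a + b) b) (triangle (a + b) b)"
    using reflexive_basic_polygons(2,1)[OF uni'] triangle_subset_big_triangle by (rule zigzag_supset)
  moreover have "zigzag reflexive_polygon (triangle (a + b) b) (square (1,0) (0,1))"
    using reflexive_basic_polygons uni' by (intro zigzag_triangle_std) blast+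
  ultimately show ?thesis
    using zigzag_trans by metis
qed

section \<open>Polygons with bounded lattice rays contain a basic polygon\<close>

lemma mem_convex_sub_combination:
  assumes "convex K" "0 \<in> K" "p \<in> K" "q \<in> K" "0 \<le> \<alpha>" "0 \<le> \<beta>" "\<alpha> + \<beta> \<le> 1"
  shows "\<alpha> *\<^sub>R p + \<beta> *\<^sub>R q \<in> K"
proof -
  have "\<alpha> *\<^sub>R p + \<beta> *\<^sub>R q \<in> convex hull {0, p, q}"
    by (rule convex_combination_in_hull_3[where a = "1 - \<alpha> - \<beta>" and b = \<alpha> and c = \<beta>
          and p = 0 and q = p and r = q])
      (use assms in auto)
  moreover have "convex hull {0, p, q} \<subseteq> K"
    using assms by (simp add: hull_minimal)
  ultimately show ?thesis by blast
qed

lemma lat_mem_convex_if_sub_combination: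
  assumes K: "convex K" "0 \<in> K" "lat p \<in> K" "lat q \<in> K"
    and w: "iscale d w = iscale a p + iscale b q" "0 \<le> a" "0 \<le> b" "a + b \<le> d" "0 < d"
  shows "lat w \<in> K"
proof -
  have eq: "of_int d *\<^sub>R lat w = of_int a *\<^sub>R lat p + of_int b *\<^sub>R lat q"
    using arg_cong[OF w(1), of lat] by simp
  have "lat w = inverse (of_int d) *\<^sub>R (of_int d *\<^sub>R lat w)"
    using w(5) by simp
  also have "\<dots> = (of_int a / of_int d) *\<^sub>R lat p + (of_int b / of_int d) *\<^sub>R lat q"
    unfolding eq by (simp add: scaleR_add_right divide_inverse_commute)
  also have "\<dots> \<in> K"
    using w(2-5) by (intro mem_convex_sub_combination[OF K]) (auto simp: add_divide_distrib[symmetric])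
  finally show ?thesis .
qed

lemma exists_mem_inner_pos:
  fixes c :: "'a::real_inner"
  assumes "0 \<in> interior K" "c \<noteq> 0"
  obtains v where "v \<in> K" "inner c v > 0"
proof -
  obtain e where e: "e > 0" "ball 0 e \<subseteq> K"
    using assms(1) mem_interior by blast
  define v where "v = (e / (2 * norm c)) *\<^sub>R c"
  have "v \<in> K"
    using e assms(2) by (auto simp: v_def)
  moreover have "inner c v > 0"
    using e assms(2) by (simp add: v_def)
  ultimately show ?thesis using that by blast
qed

definition lattice_ray_bounded :: "(real \<times> real) set \<Rightarrow> bool" where
  "lattice_ray_bounded K \<longleftrightarrow> (\<forall>z t. z \<noteq> 0 \<longrightarrow> 1 < t \<longrightarrow> t *\<^sub>R lat z \<notin> K)"

lemma lattice_ray_boundedD: "lattice_ray_bounded K \<Longrightarrow> z \<noteq> 0 \<Longrightarrow> 1 < t \<Longrightarrow> t *\<^sub>R lat z \<notin> K"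
  unfolding lattice_ray_bounded_def by blast

lemma int_nonneg_if_mult_ge_neg1:
  fixes t :: real
  assumes "1 < t" "-1 \<le> t * of_int m"
  shows "0 \<le> m"
proof (rule ccontr)
  assume "\<not> 0 \<le> m"
  then have "t * of_int m \<le> t * (-1)"
    using assms(1) by (intro mult_left_mono) auto
  then show False
    using assms by simp
qed

lemma reflexive_polygon_lattice_ray_bounded:
  assumes "reflexive_polygon P"
  shows "lattice_ray_bounded P"
  unfolding lattice_ray_bounded_def
proof (intro allI impI notI)
  fix z t assume z: "z \<noteq> 0" and t: "1 < t" and tz: "t *\<^sub>R lat z \<in> P"
  obtain D where D: "\<forall>v\<in>D. lattice_pt v" "polar_dual P = convex hull D"
    using assms unfolding reflexive_polygon_def lattice_polygon_def by blast
  obtain S where S: "finite S" "P = convex hull S"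
    using assms unfolding reflexive_polygon_def lattice_polygon_def by blast
  have "inner (- lat z) d \<le> 0" if "d \<in> D" for d
  proof -
    obtain d' where d': "d = lat d'"
      using D(1) \<open>d \<in> D\<close> lattice_pt_iff by blast
    have "d \<in> polar_dual P"
      using \<open>d \<in> D\<close> D(2) hull_subset[of D convex] by blast
    then have "-1 \<le> t * inner (lat z) d"
      using tz unfolding polar_dual_def by (auto simp: inner_commute)
    moreover have eq: "inner (lat z) d = of_int (fst z * fst d' + snd z * snd d')"
      by (simp add: d' inner_lat)
    ultimately have "0 \<le> fst z * fst d' + snd z * snd d'"
      using int_nonneg_if_mult_ge_neg1[OF t] by (simp only:)
    then have "0 \<le> inner (lat z) d"
      unfolding eq by (rule of_int_nonneg)
    then show ?thesis
      by simp
  qed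
  then have "polar_dual P \<subseteq> {u. inner (- lat z) u \<le> 0}"
    unfolding D(2) by (intro hull_minimal) (auto simp: convex_halfspace_ge)
  moreover have "0 \<in> interior (polar_dual P)"
    unfolding S(2) polar_dual_convex_hull using S(1) by (rule zero_in_interior_polar_dual)
  moreover have "- lat z \<noteq> 0"
    using z by simp
  ultimately show False
    by (metis exists_mem_inner_pos mem_Collect_eq not_le subsetD)
qed

lemma terminal_polygon_lattice_ray_bounded:
  assumes "terminal_polygon P"
  shows "lattice_ray_bounded P"
  unfolding lattice_ray_bounded_def
proof (intro allI impI notI)
  fix z t assume z: "z \<noteq> 0" and t: "1 < t" and tz: "t *\<^sub>R lat z \<in> P"
  have "convex P" "0 \<in> P"
    using assms interior_subset unfolding terminal_polygon_def lattice_polygon_def by auto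
  have mid: "lat z = (1 - 1/t) *\<^sub>R 0 + (1/t) *\<^sub>R (t *\<^sub>R lat z)"
    using t by simp
  have "(1 - 1/t) *\<^sub>R 0 + (1/t) *\<^sub>R (t *\<^sub>R lat z) \<in> P"
    using t \<open>0 \<in> P\<close> tz \<open>convex P\<close> by (intro convexD) auto
  then have "lat z \<in> P"
    using mid by simp
  moreover have "{v \<in> P. lattice_pt v} = {v. v extreme_point_of P} \<union> {0}"
    using assms unfolding terminal_polygon_def by blast
  ultimately have "lat z extreme_point_of P"
    using z by (metis (mono_tags, lifting) Un_iff lat_eq_0_iff lattice_pt_lat mem_Collect_eq
        singletonD)
  moreover have "lat z \<in> open_segment 0 (t *\<^sub>R lat z)"
    unfolding in_segment using z t mid by (intro conjI exI[of _ "1/t"]) auto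
  ultimately show False
    using \<open>0 \<in> P\<close> tz unfolding extreme_point_of_def by blast
qed

lemma exists_det2_not_dvd:
  assumes "det2 p q = d" "d \<ge> 2"
  obtains e where "\<not> (d dvd det2 e q \<and> d dvd det2 p e)"
proof (rule ccontr)
  assume "\<not> thesis"
  then have all: "d dvd det2 e q \<and> d dvd det2 p e" for e
    using that by blast
  from all[of "(1,0)"] all[of "(0,1)"]
  have "d dvd fst p" "d dvd snd p" "d dvd fst q" "d dvd snd q"
    by (simp_all add: det2_def)
  then have "d * d dvd d"
    unfolding assms(1)[symmetric] det2_def by (intro dvd_diff mult_dvd_mono)
  then show False
    using assms(2) by simp
qed

text \<open>If det2 p q = d \<ge> 2, the lattice is strictly finer than the one spanned by p and q,
  so the closed triangle 0, p, q contains a lattice point w different from its vertices.\<close>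

lemma exists_lattice_point_in_triangle:
  assumes d: "det2 p q = d" "d \<ge> 2"
  obtains w a b where "iscale d w = iscale a p + iscale b q" "0 \<le> a" "0 \<le> b" "a + b \<le> d"
    "0 < a \<or> 0 < b" "a < d" "b < d"
proof -
  obtain e where e: "\<not> (d dvd det2 e q \<and> d dvd det2 p e)"
    using exists_det2_not_dvd[OF d] .
  define a0 where "a0 = det2 e q mod d"
  define b0 where "b0 = det2 p e mod d"
  define w where "w = e - iscale (det2 e q div d) p - iscale (det2 p e div d) q"
  have "iscale d e = iscale (d * (det2 e q div d) + a0) p + iscale (d * (det2 p e div d) + b0) q"
    using det2_cramer[of p q e] d(1) by (simp add: a0_def b0_def)
  then have w: "iscale d w = iscale a0 p + iscale b0 q"
    unfolding w_def by (simp add: iscale_def prod_eq_iff algebra_simps)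
  have bounds: "0 \<le> a0" "a0 < d" "0 \<le> b0" "b0 < d"
    using d by (simp_all add: a0_def b0_def)
  have "0 < a0 \<or> 0 < b0"
  proof (rule ccontr)
    assume "\<not> ?thesis"
    then have "a0 = 0" "b0 = 0"
      using bounds by auto
    then show False
      using e by (simp add: a0_def b0_def dvd_eq_mod_eq_0)
  qed
  show ?thesis
  proof (cases "a0 + b0 \<le> d")
    case True
    then show ?thesis
      using that[OF w] bounds \<open>0 < a0 \<or> 0 < b0\<close> by blast
  next
    case False
    have "iscale d (p + q - w) = iscale (d - a0) p + iscale (d - b0) q"
      using w by (simp add: iscale_def prod_eq_iff algebra_simps)
    then show ?thesis
      by (rule that) (use bounds False in auto)
  qed
qed

lemma lattice_ray_bounded_no_fraction:
  assumes "lattice_ray_bounded K" "lat q \<in> K" "q \<noteq> 0"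
    and "iscale d w = iscale b q" "0 < b" "b < d"
  shows False
proof -
  have eq: "of_int d *\<^sub>R lat w = of_int b *\<^sub>R lat q"
    using arg_cong[OF assms(4), of lat] by simp
  have "lat q = inverse (of_int b) *\<^sub>R (of_int b *\<^sub>R lat q)"
    using assms(5) by simp
  also have "\<dots> = (of_int d / of_int b) *\<^sub>R lat w"
    unfolding eq[symmetric] by (simp add: divide_inverse_commute)
  finally have q: "lat q = (of_int d / of_int b) *\<^sub>R lat w" .
  then have "w \<noteq> 0"
    using assms(3) by auto
  moreover have "of_int d / of_int b > (1::real)"
    using assms(5,6) by simp
  ultimately show False
    using lattice_ray_boundedD[OF assms(1)] assms(2) q by metis
qed

lemma exists_lattice_point_inside_triangle:
  assumes K: "convex K" "0 \<in> K" "lattice_ray_bounded K"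
    and pq: "lat p \<in> K" "lat q \<in> K" "det2 p q \<ge> 2"
  obtains w a b where "lat w \<in> K" "iscale (det2 p q) w = iscale a p + iscale b q"
    "0 < a" "0 < b" "a < det2 p q" "b < det2 p q" "a + b \<le> det2 p q"
proof -
  obtain w a b where w: "iscale (det2 p q) w = iscale a p + iscale b q" "0 \<le> a" "0 \<le> b"
      "a + b \<le> det2 p q" "0 < a \<or> 0 < b" "a < det2 p q" "b < det2 p q"
    using exists_lattice_point_in_triangle[OF refl pq(3)] .
  have "lat w \<in> K"
    using lat_mem_convex_if_sub_combination[OF K(1,2) pq(1,2) w(1-4)] pq(3) by simp
  moreover have "p \<noteq> 0" "q \<noteq> 0"
    using pq(3) by auto
  then have "a \<noteq> 0" "b \<noteq> 0"
    using lattice_ray_bounded_no_fraction[OF K(3) pq(1), of "det2 p q" w a]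
      lattice_ray_bounded_no_fraction[OF K(3) pq(2), of "det2 p q" w b] w
    by (auto simp: iscale_def)
  ultimately show ?thesis
    using that w by simp
qed

lemma exists_unimodular_partner:
  assumes K: "convex K" "0 \<in> K" "lattice_ray_bounded K" and p: "lat p \<in> K"
  shows "lat q \<in> K \<Longrightarrow> det2 p q \<ge> 1 \<Longrightarrow> \<exists>q'. lat q' \<in> K \<and> det2 p q' = 1"
proof (induction "nat (det2 p q)" arbitrary: q rule: less_induct)
  case less
  show ?case
  proof (cases "det2 p q = 1")
    case True
    then show ?thesis
      using less.prems by blast
  next
    case False
    then have d2: "det2 p q \<ge> 2"
      using less.prems by simp
    then obtain w a b where w: "lat w \<in> K" "iscale (det2 p q) w = iscale a p + iscale b q"
      "0 < b" "b < det2 p q"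
      using exists_lattice_point_inside_triangle[OF K p less.prems(1)] by metis
    have "det2 p q * det2 p w = b * det2 p q"
      using det2_right_combination[OF w(2), of p] by simp
    then have "det2 p w = b"
      using d2 by simp
    then show ?thesis
      using less.hyps[of w] w by simp
  qed
qed

lemma exists_det2_pos:
  assumes "K = convex hull (lat ` S)" "0 \<in> interior K" "u \<noteq> 0"
  obtains s where "s \<in> S" "det2 u s > 0"
proof -
  define c where "c = lat (- snd u, fst u)"
  have c: "inner c (lat s) = of_int (det2 u s)" for s
    by (simp add: c_def inner_lat det2_def)
  have "\<exists>s\<in>S. det2 u s > 0"
  proof (rule ccontr)
    assume "\<not> ?thesis"
    then have "lat ` S \<subseteq> {v. inner c v \<le> 0}"
      by (auto simp: c)
    then have "K \<subseteq> {v. inner c v \<le> 0}"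
      unfolding assms(1) by (intro hull_minimal) (auto simp: convex_halfspace_le)
    moreover have "c \<noteq> 0"
      unfolding c_def lat_eq_0_iff using assms(3) by (auto simp: zero_prod_def prod_eq_iff)
    ultimately show False
      using exists_mem_inner_pos[OF assms(2)] by (metis mem_Collect_eq not_le subsetD)
  qed
  then show ?thesis
    using that by blast
qed

lemma exists_antipodal_if_opposite:
  assumes K: "convex K" "0 \<in> K" and "lat p \<in> K" "lat r \<in> K" "p \<noteq> 0" "r \<noteq> 0"
    and "iscale n r = iscale m p" "0 < n" "m < 0"
  obtains u where "u \<noteq> 0" "lat u \<in> K" "lat (- u) \<in> K"
proof (cases "- m \<le> n")
  case True
  have "iscale n (- r) = iscale (- m) p + iscale 0 p"
    using assms(7) by (simp add: iscale_def prod_eq_iff)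
  then have "lat (- r) \<in> K"
    by (rule lat_mem_convex_if_sub_combination[OF K \<open>lat p \<in> K\<close> \<open>lat p \<in> K\<close>])
      (use True assms in auto)
  then show ?thesis
    using that assms by blast
next
  case False
  have "iscale (- m) (- p) = iscale n r + iscale 0 r"
    using assms(7) by (simp add: iscale_def prod_eq_iff)
  then have "lat (- p) \<in> K"
    by (rule lat_mem_convex_if_sub_combination[OF K \<open>lat r \<in> K\<close> \<open>lat r \<in> K\<close>])
      (use False assms in auto)
  then show ?thesis
    using that assms by blast
qed

definition contains_basic_polygon :: "(real \<times> real) set \<Rightarrow> bool" where
  "contains_basic_polygon K \<longleftrightarrow> (\<exists>a b. unimodular a b \<and>
     (lat ` {a, b, -a-b} \<subseteq> K \<or> lat ` {a, b, -a, -b} \<subseteq> K \<or> lat ` {a, b, -a-b-b} \<subseteq> K))"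

lemma contains_basic_polygon_triangleI:
  "unimodular a b \<Longrightarrow> lat a \<in> K \<Longrightarrow> lat b \<in> K \<Longrightarrow> lat (-a-b) \<in> K \<Longrightarrow> contains_basic_polygon K"
  unfolding contains_basic_polygon_def by (intro exI[of _ a] exI[of _ b]) auto

lemma contains_basic_polygon_squareI:
  "unimodular a b \<Longrightarrow> lat a \<in> K \<Longrightarrow> lat b \<in> K \<Longrightarrow> lat (-a) \<in> K \<Longrightarrow> lat (-b) \<in> K \<Longrightarrow>
    contains_basic_polygon K"
  unfolding contains_basic_polygon_def by (intro exI[of _ a] exI[of _ b]) auto

lemma contains_basic_polygon_skew_triangleI:
  "unimodular a b \<Longrightarrow> lat a \<in> K \<Longrightarrow> lat b \<in> K \<Longrightarrow> lat (-a-b-b) \<in> K \<Longrightarrow>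
    contains_basic_polygon K"
  unfolding contains_basic_polygon_def by (intro exI[of _ a] exI[of _ b]) auto

lemma lattice_ray_bounded_midpoint_bound:
  assumes K: "convex K" "lattice_ray_bounded K"
    and "u \<noteq> 0" "lat q \<in> K" "lat (iscale x u - q) \<in> K"
  shows "\<bar>x\<bar> \<le> 2"
proof -
  have "(1/2) *\<^sub>R lat q + (1 - 1/2) *\<^sub>R lat (iscale x u - q) \<in> K"
    using assms(4,5) K(1) by (intro convexD) auto
  moreover have "(1/2) *\<^sub>R lat q + (1 - 1/2) *\<^sub>R lat (iscale x u - q) = (of_int x / 2) *\<^sub>R lat u"
    by (simp add: algebra_simps)
  ultimately have mid: "(of_int x / 2) *\<^sub>R lat u \<in> K" "(- of_int x / 2) *\<^sub>R lat (- u) \<in> K"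
    by simp_all
  have "\<not> of_int x / 2 > (1::real)" "\<not> - of_int x / 2 > (1::real)"
    using lattice_ray_boundedD[OF K(2)] mid \<open>u \<noteq> 0\<close> by (metis neg_equal_0_iff_equal)+
  then show ?thesis
    by linarith
qed

lemma contains_basic_polygon_if_antipodal_partners:
  assumes u: "lat u \<in> K" "lat (- u) \<in> K" and q: "lat q \<in> K" "det2 u q = 1"
    and r: "lat (iscale x u - q) \<in> K" and x: "\<bar>x\<bar> \<le> 2"
  shows "contains_basic_polygon K"
proof -
  define r where "r = iscale x u - q"
  have uq: "unimodular u q"
    using q(2) by (simp add: unimodular_def)
  from x consider "x = 0" | "x = 1" | "x = -1" | "x = 2" | "x = -2"
    by linarith
  then show ?thesis
  proof cases
    case 1
    then have "iscale x u - q = -q"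
      by (simp add: iscale_def prod_eq_iff)
    then have "lat (-q) \<in> K"
      using r by (simp only:)
    then show ?thesis
      by (rule contains_basic_polygon_squareI[OF uq u(1) q(1) u(2)])
  next
    case 2
    then have "-r-q = -u" "unimodular r q"
      using q(2) by (simp_all add: r_def iscale_def prod_eq_iff unimodular_def det2_def algebra_simps)
    then show ?thesis
      using contains_basic_polygon_triangleI r q(1) u(2) unfolding r_def by metis
  next
    case 3
    then have "-u-q = r"
      by (simp add: r_def iscale_def prod_eq_iff)
    then show ?thesis
      using contains_basic_polygon_triangleI[OF uq u(1) q(1)] r unfolding r_def by metis
  next
    case 4
    then have "-q-(-u)-(-u) = r" "unimodular q (-u)"
      using q(2) by (simp_all add: r_def iscale_def prod_eq_iff unimodular_def det2_def algebra_simps)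
    then show ?thesis
      using contains_basic_polygon_skew_triangleI q(1) u(2) r unfolding r_def by metis
  next
    case 5
    then have "-r-u-u = q" "unimodular r u"
      using q(2) by (simp_all add: r_def iscale_def prod_eq_iff unimodular_def det2_def algebra_simps)
    then show ?thesis
      using contains_basic_polygon_skew_triangleI u(1) q(1) r unfolding r_def by metis
  qed
qed

lemma contains_basic_polygon_if_antipodal:
  assumes K: "K = convex hull (lat ` S)" "0 \<in> interior K" "lattice_ray_bounded K"
    and u: "u \<noteq> 0" "lat u \<in> K" "lat (-u) \<in> K"
  shows "contains_basic_polygon K"
proof -
  have cK: "convex K" and K0: "0 \<in> K" and SK: "lat ` S \<subseteq> K"
    using K(1,2) interior_subset hull_subset[of "lat ` S"] by auto
  have "-u \<noteq> 0"
    using u(1) by simp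
  obtain q0 r0 where "q0 \<in> S" "det2 u q0 > 0" "r0 \<in> S" "det2 (-u) r0 > 0"
    using exists_det2_pos[OF K(1,2) u(1)] exists_det2_pos[OF K(1,2) \<open>-u \<noteq> 0\<close>] by metis
  then have "lat q0 \<in> K" "det2 u q0 \<ge> 1" "lat r0 \<in> K" "det2 (-u) r0 \<ge> 1"
    using SK by auto
  then obtain q r where q: "lat q \<in> K" "det2 u q = 1" and r: "lat r \<in> K" "det2 (-u) r = 1"
    using exists_unimodular_partner[OF cK K0 K(3) u(2)] exists_unimodular_partner[OF cK K0 K(3) u(3)]
    by metis
  have "det2 u r = -1"
    using r(2) by (simp add: det2_def)
  then have "r = iscale (det2 r q) u - q"
    using det2_cramer[of u q r] q(2) by (simp add: iscale_def prod_eq_iff)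
  then have "lat (iscale (det2 r q) u - q) \<in> K"
    using r(1) by simp
  then show ?thesis
    using contains_basic_polygon_if_antipodal_partners[OF u(2,3) q]
      lattice_ray_bounded_midpoint_bound[OF cK K(3) u(1) q(1)] by blast
qed

lemma opposite_if_det2_combination_zero:
  assumes w: "iscale (det2 p q) w = iscale a p + iscale b q" and "det2 r w = 0" "det2 p q \<noteq> 0"
  shows "iscale (det2 q r) w = iscale (- a) r"
proof -
  define D1 D2 D3 where "D1 = det2 p q" and "D2 = det2 q r" and "D3 = det2 r p"
  have "a * D3 = b * D2"
    using det2_right_combination[OF w, of r] assms(2) by (simp add: D2_def D3_def det2_swap[of r q])
  moreover have "iscale D1 r = iscale (- D2) p + iscale (- D3) q"
    using det2_cramer[of p q r] by (simp add: D1_def D2_def D3_def det2_swap[of r q] det2_swap[of p r])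
  then have "D1 * fst r = - D2 * fst p - D3 * fst q" "D1 * snd r = - D2 * snd p - D3 * snd q"
    by (simp_all add: iscale_def prod_eq_iff)
  moreover have "D1 * fst w = a * fst p + b * fst q" "D1 * snd w = a * snd p + b * snd q"
    using w by (simp_all add: D1_def iscale_def prod_eq_iff)
  ultimately have "D1 * (D2 * fst w + a * fst r) = 0" "D1 * (D2 * snd w + a * snd r) = 0"
    by algebra+
  then show ?thesis
    using assms(3) by (simp add: D1_def D2_def iscale_def prod_eq_iff)
qed

definition surrounds_origin :: "int \<times> int \<Rightarrow> int \<times> int \<Rightarrow> int \<times> int \<Rightarrow> bool" where
  "surrounds_origin p q r \<longleftrightarrow> 0 < det2 p q \<and> 0 < det2 q r \<and> 0 < det2 r p"

definition twice_area :: "int \<times> int \<Rightarrow> int \<times> int \<Rightarrow> int \<times> int \<Rightarrow> int" where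
  "twice_area p q r = det2 p q + det2 q r + det2 r p"

lemma det2_point_in_triangle:
  assumes w: "iscale (det2 p q) w = iscale a p + iscale b q"
    and ab: "0 < a" "0 < b" "a < det2 p q" "b < det2 p q" and qr: "0 < det2 q r" and rp: "0 < det2 r p"
  shows "det2 w q = a" "det2 p w = b" "det2 r w < det2 r p" "det2 w r < det2 q r"
proof -
  define D1 D2 D3 where "D1 = det2 p q" and "D2 = det2 q r" and "D3 = det2 r p"
  have D: "D1 > 0" "D2 > 0" "D3 > 0"
    using ab qr rp by (auto simp: D1_def D2_def D3_def)
  show "det2 w q = a" "det2 p w = b"
    using det2_right_combination[OF w, of q] det2_right_combination[OF w, of p] D
    by (simp_all add: D1_def det2_swap[of q p] det2_swap[of q w])
  have E: "D1 * det2 r w = a * D3 - b * D2"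
    using det2_right_combination[OF w, of r] by (simp add: D1_def D2_def D3_def det2_swap[of r q])
  have "a * D3 < D1 * D3" "b * D2 < D1 * D2" "0 < a * D3" "0 < b * D2"
    using ab D by (simp_all add: D1_def mult_strict_right_mono)
  then have lt: "D1 * det2 r w < D1 * D3" "D1 * (- det2 r w) < D1 * D2"
    using E by linarith+
  show "det2 r w < det2 r p"
    using lt(1) D by (simp add: D3_def)
  show "det2 w r < det2 q r"
    using lt(2) D mult_less_cancel_left_pos[of D1 "- det2 r w" D2] det2_swap[of w r]
    by (simp add: D2_def)
qed

lemma shrink_surrounding_triangle_edge:
  assumes K: "convex K" "0 \<in> K" "lattice_ray_bounded K"
    and pqr: "lat p \<in> K" "lat q \<in> K" "lat r \<in> K" "surrounds_origin p q r"
    and pq: "det2 p q \<ge> 2"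
  shows "(\<exists>p' q' r'. lat p' \<in> K \<and> lat q' \<in> K \<and> lat r' \<in> K \<and> surrounds_origin p' q' r' \<and>
            twice_area p' q' r' < twice_area p q r)
         \<or> (\<exists>u. u \<noteq> 0 \<and> lat u \<in> K \<and> lat (-u) \<in> K)"
proof -
  have qr: "0 < det2 q r" and rp: "0 < det2 r p"
    using pqr(4) by (auto simp: surrounds_origin_def)
  obtain w a b where wK: "lat w \<in> K" and w: "iscale (det2 p q) w = iscale a p + iscale b q"
    and ab: "0 < a" "0 < b" "a < det2 p q" "b < det2 p q"
    using exists_lattice_point_inside_triangle[OF K pqr(1,2) pq] by blast
  note dets = det2_point_in_triangle[OF w ab qr rp]
  consider "0 < det2 r w" | "0 < det2 w r" | "det2 r w = 0"
    using det2_swap[of w r] by linarith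
  then show ?thesis
  proof cases
    case 1
    then have "surrounds_origin w q r" "twice_area w q r < twice_area p q r"
      using dets ab qr unfolding surrounds_origin_def twice_area_def by linarith+
    then show ?thesis
      using wK pqr by blast
  next
    case 2
    then have "surrounds_origin p w r" "twice_area p w r < twice_area p q r"
      using dets ab rp unfolding surrounds_origin_def twice_area_def by linarith+
    then show ?thesis
      using wK pqr by blast
  next
    case 3
    then have opp: "iscale (det2 q r) w = iscale (- a) r"
      using opposite_if_det2_combination_zero[OF w] pq by simp
    have "r \<noteq> 0"
      using qr by auto
    moreover have "w \<noteq> 0"
      using opp ab \<open>r \<noteq> 0\<close> by (auto simp: iscale_def zero_prod_def prod_eq_iff)
    moreover have "- a < 0"
      using ab by simp
    ultimately obtain u where "u \<noteq> 0" "lat u \<in> K" "lat (- u) \<in> K"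
      using exists_antipodal_if_opposite[OF K(1,2) pqr(3) wK _ _ opp qr] by blast
    then show ?thesis
      by blast
  qed
qed

lemma shrink_surrounding_triangle:
  assumes K: "convex K" "0 \<in> K" "lattice_ray_bounded K"
    and pqr: "lat p \<in> K" "lat q \<in> K" "lat r \<in> K" "surrounds_origin p q r"
    and not_unimodular: "\<not> (det2 p q = 1 \<and> det2 q r = 1 \<and> det2 r p = 1)"
  shows "(\<exists>p' q' r'. lat p' \<in> K \<and> lat q' \<in> K \<and> lat r' \<in> K \<and> surrounds_origin p' q' r' \<and>
            twice_area p' q' r' < twice_area p q r)
         \<or> (\<exists>u. u \<noteq> 0 \<and> lat u \<in> K \<and> lat (-u) \<in> K)"
proof -
  have rotate: "surrounds_origin q r p" "surrounds_origin r p q"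
    "twice_area q r p = twice_area p q r" "twice_area r p q = twice_area p q r"
    using pqr(4) by (auto simp: surrounds_origin_def twice_area_def)
  consider "det2 p q \<ge> 2" | "det2 q r \<ge> 2" | "det2 r p \<ge> 2"
    using pqr(4) not_unimodular unfolding surrounds_origin_def by linarith
  then show ?thesis
  proof cases
    case 1
    then show ?thesis
      by (rule shrink_surrounding_triangle_edge[OF K pqr])
  next
    case 2
    then show ?thesis
      using shrink_surrounding_triangle_edge[OF K pqr(2,3,1) rotate(1)] rotate(3) by simp
  next
    case 3
    then show ?thesis
      using shrink_surrounding_triangle_edge[OF K pqr(3,1,2) rotate(2)] rotate(4) by simp
  qed
qed

lemma neg_add_eq_if_det2_one:
  assumes "det2 p q = 1" "det2 q r = 1" "det2 r p = 1"
  shows "-p-q = r"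
  using det2_cramer[of p q r] assms
  by (simp add: det2_swap[of r q] det2_swap[of p r] iscale_def prod_eq_iff)

lemma contains_basic_polygon_if_surrounds_origin:
  assumes K: "K = convex hull (lat ` S)" "0 \<in> interior K" "lattice_ray_bounded K"
  shows "lat p \<in> K \<Longrightarrow> lat q \<in> K \<Longrightarrow> lat r \<in> K \<Longrightarrow> surrounds_origin p q r \<Longrightarrow>
    contains_basic_polygon K"
proof (induction "nat (twice_area p q r)" arbitrary: p q r rule: less_induct)
  case less
  have cK: "convex K" and K0: "0 \<in> K"
    using K(1,2) interior_subset by auto
  show ?case
  proof (cases "det2 p q = 1 \<and> det2 q r = 1 \<and> det2 r p = 1")
    case True
    then have "-p-q = r" "unimodular p q"
      using neg_add_eq_if_det2_one by (auto simp: unimodular_def)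
    then show ?thesis
      using contains_basic_polygon_triangleI less.prems(1-3) by metis
  next
    case False
    from shrink_surrounding_triangle[OF cK K0 K(3) less.prems False] show ?thesis
    proof (elim disjE exE conjE)
      fix p' q' r'
      assume "lat p' \<in> K" "lat q' \<in> K" "lat r' \<in> K" "surrounds_origin p' q' r'"
        "twice_area p' q' r' < twice_area p q r"
      moreover from this(4) have "0 < twice_area p' q' r'"
        by (simp add: surrounds_origin_def twice_area_def)
      ultimately show ?thesis
        using less.hyps by auto
    qed (use contains_basic_polygon_if_antipodal[OF K] in blast)
  qed
qed

lemma sum_squares_pos_if_nonzero:
  fixes p :: "int \<times> int"
  assumes "p \<noteq> 0"
  shows "0 < fst p * fst p + snd p * snd p"
proof -
  have "fst p \<noteq> 0 \<or> snd p \<noteq> 0"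
    using assms by (metis prod.collapse zero_prod_def)
  then show ?thesis
    by (simp add: sum_squares_gt_zero_iff)
qed

text \<open>The quotient of inner product and determinant is the cotangent of the angle from p.\<close>

lemma det2_nonpos_if_cot_le:
  assumes pq: "0 < det2 p q" and pr: "0 < det2 p r"
    and le: "of_int (fst p * fst q + snd p * snd q) / of_int (det2 p q)
      \<le> (of_int (fst p * fst r + snd p * snd r) / of_int (det2 p r) :: real)"
  shows "det2 q r \<le> 0"
proof -
  have "of_int ((fst p * fst q + snd p * snd q) * det2 p r)
      \<le> (of_int ((fst p * fst r + snd p * snd r) * det2 p q) :: real)"
    using pq pr le by (simp add: field_simps)
  then have "(fst p * fst q + snd p * snd q) * det2 p r \<le> (fst p * fst r + snd p * snd r) * det2 p q"
    by (simp only: of_int_le_iff)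
  moreover have "(fst p * fst r + snd p * snd r) * det2 p q - (fst p * fst q + snd p * snd q) * det2 p r
      = (fst p * fst p + snd p * snd p) * det2 r q"
    unfolding det2_def by algebra
  moreover have "p \<noteq> 0"
    using pq by auto
  ultimately have "0 \<le> det2 r q"
    using sum_squares_pos_if_nonzero zero_le_mult_iff by (smt (verit))
  then show ?thesis
    using det2_swap[of r q] by simp
qed

lemma opposite_if_det2_zero:
  assumes "det2 r p = 0" "0 < det2 p q" "0 < det2 q r"
  obtains n m where "iscale n r = iscale m p" "0 < n" "m < 0"
proof -
  define n where "n = fst p * fst p + snd p * snd p"
  define m where "m = fst r * fst p + snd r * snd p"
  have "n * fst r = m * fst p" "n * snd r = m * snd p"
    using assms(1) unfolding n_def m_def det2_def by algebra+
  then have opp: "iscale n r = iscale m p"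
    by (simp add: iscale_def)
  have "p \<noteq> 0"
    using assms(2) by auto
  then have "0 < n"
    unfolding n_def by (rule sum_squares_pos_if_nonzero)
  have "n * det2 q r = m * det2 q p"
    using opp by (metis det2_iscale_right)
  moreover have "0 < n * det2 q r"
    using \<open>0 < n\<close> assms(3) by simp
  ultimately have "m * det2 p q < 0"
    using det2_swap[of q p] by simp
  then have "m < 0"
    using assms(2) by (simp add: mult_less_0_iff)
  then show ?thesis
    using that opp \<open>0 < n\<close> by blast
qed

lemma exists_first_left_of:
  assumes "finite S" "s0 \<in> S" "0 < det2 p s0"
  obtains q where "q \<in> S" "0 < det2 p q" "\<And>r. r \<in> S \<Longrightarrow> 0 < det2 p r \<Longrightarrow> det2 q r \<le> 0"
proof -
  define A where "A = {s \<in> S. 0 < det2 p s}"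
  define f :: "int \<times> int \<Rightarrow> real"
    where "f s = of_int (fst p * fst s + snd p * snd s) / of_int (det2 p s)" for s
  have "finite A"
    using assms(1) by (simp add: A_def)
  moreover have "A \<noteq> {}"
    using assms(2,3) unfolding A_def by blast
  ultimately have "Min (f ` A) \<in> f ` A"
    by (intro Min_in) auto
  then obtain q where "q \<in> A" "f q = Min (f ` A)"
    by (metis imageE)
  then have "q \<in> S" "0 < det2 p q" "\<And>r. r \<in> A \<Longrightarrow> f q \<le> f r"
    using \<open>finite A\<close> by (auto simp: A_def)
  then show ?thesis
    using that det2_nonpos_if_cot_le unfolding A_def f_def by blast
qed

lemma contains_basic_polygon_if_lattice_ray_bounded:
  assumes K: "K = convex hull (lat ` S)" "finite S" "0 \<in> interior K" "lattice_ray_bounded K"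
  shows "contains_basic_polygon K"
proof -
  have cK: "convex K" and K0: "0 \<in> K"
    using K(1,3) interior_subset by auto
  have SK: "lat s \<in> K" if "s \<in> S" for s
    using K(1) hull_subset[of "lat ` S"] that by auto
  obtain p where p: "p \<in> S" "det2 (1,0) p > 0"
    using exists_det2_pos[OF K(1,3), of "(1,0)"] by (auto simp: zero_prod_def)
  then have "p \<noteq> 0"
    by auto
  obtain s0 where "s0 \<in> S" "0 < det2 p s0"
    using exists_det2_pos[OF K(1,3) \<open>p \<noteq> 0\<close>] .
  then obtain q where q: "q \<in> S" "0 < det2 p q"
    and first: "\<And>r. r \<in> S \<Longrightarrow> 0 < det2 p r \<Longrightarrow> det2 q r \<le> 0"
    using exists_first_left_of[OF K(2)] by blast
  then have "q \<noteq> 0"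
    by auto
  obtain r where r: "r \<in> S" "0 < det2 q r"
    using exists_det2_pos[OF K(1,3) \<open>q \<noteq> 0\<close>] .
  consider "det2 r p > 0" | "det2 r p = 0" | "det2 r p < 0"
    by linarith
  then show ?thesis
  proof cases
    case 1
    then have "surrounds_origin p q r"
      using q(2) r(2) by (simp add: surrounds_origin_def)
    then show ?thesis
      using contains_basic_polygon_if_surrounds_origin[OF K(1,3,4)] SK p(1) q(1) r(1) by blast
  next
    case 2
    obtain n m where "iscale n r = iscale m p" "0 < n" "m < 0"
      using opposite_if_det2_zero[OF 2 q(2) r(2)] .
    moreover have "r \<noteq> 0"
      using r(2) by auto
    ultimately obtain u where "u \<noteq> 0" "lat u \<in> K" "lat (- u) \<in> K"
      using exists_antipodal_if_opposite[OF cK K0 SK[OF p(1)] SK[OF r(1)] \<open>p \<noteq> 0\<close>] by blast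
    then show ?thesis
      using contains_basic_polygon_if_antipodal[OF K(1,3,4)] by blast
  next
    case 3
    then have "det2 q r \<le> 0"
      using first[OF r(1)] det2_swap[of r p] by simp
    then show ?thesis
      using r(2) by simp
  qed
qed

lemma lattice_polygon_contains_basic_polygon:
  assumes "lattice_polygon P" "0 \<in> interior P" "lattice_ray_bounded P"
  shows "contains_basic_polygon P"
proof -
  obtain V where V: "finite V" "\<forall>v\<in>V. lattice_pt v" "P = convex hull V"
    using assms(1) unfolding lattice_polygon_def by blast
  have "V = lat ` (lat -` V)"
    using V(2) by (auto simp: lattice_pt_iff)
  moreover have "finite (lat -` V)"
    using V(1) by (rule finite_vimageI) (simp add: inj_def)
  ultimately have "P = convex hull (lat ` (lat -` V))" "finite (lat -` V)"
    using V(3) by simp_all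
  then show ?thesis
    using contains_basic_polygon_if_lattice_ray_bounded assms(2,3) by blast
qed

text \<open>The midpoint -b of a and -a-2b is a lattice point that is not a vertex.\<close>

lemma terminal_polygon_not_contains_skew_triangle:
  assumes "terminal_polygon P" "unimodular a b"
  shows "\<not> lat ` {a, b, -a-b-b} \<subseteq> P"
proof
  assume sub: "lat ` {a, b, -a-b-b} \<subseteq> P"
  have "convex P"
    using assms(1) unfolding terminal_polygon_def lattice_polygon_def by auto
  have mid: "lat (-b) = (1 - 1/2) *\<^sub>R lat a + (1/2) *\<^sub>R lat (-a-b-b)"
    by (simp add: lat_def prod_eq_iff field_simps)
  have "lat (-b) \<in> P"
    unfolding mid using sub \<open>convex P\<close> by (intro convexD) auto
  moreover have "b \<noteq> 0"
    using assms(2) by (auto simp: unimodular_def)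
  moreover have "{v \<in> P. lattice_pt v} = {v. v extreme_point_of P} \<union> {0}"
    using assms(1) unfolding terminal_polygon_def by blast
  ultimately have "lat (-b) extreme_point_of P"
    by (metis (mono_tags, lifting) Un_iff lat_eq_0_iff lattice_pt_lat mem_Collect_eq neg_0_equal_iff_equal singletonD)
  moreover have "a \<noteq> -a-b-b"
  proof
    assume "a = -a-b-b"
    then have "b = -a"
      by (simp add: prod_eq_iff)
    then show False
      using assms(2) by (simp add: unimodular_def det2_def)
  qed
  then have "lat a \<noteq> lat (-a-b-b)"
    using lat_eq_iff by blast
  then have "lat (-b) \<in> open_segment (lat a) (lat (-a-b-b))"
    unfolding in_segment by (intro conjI exI[of _ "1/2"] mid) auto
  ultimately show False
    using sub unfolding extreme_point_of_def by auto
qed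

lemma zigzag_reflexive_polygon_std:
  assumes "reflexive_polygon P"
  shows "zigzag reflexive_polygon P (square (1,0) (0,1))"
proof -
  have P: "lattice_polygon P" "0 \<in> interior P" "convex P"
    using assms unfolding reflexive_polygon_def lattice_polygon_def by auto
  obtain a b where uni: "unimodular a b" and
    "lat ` {a, b, -a-b} \<subseteq> P \<or> lat ` {a, b, -a, -b} \<subseteq> P \<or> lat ` {a, b, -a-b-b} \<subseteq> P"
    using lattice_polygon_contains_basic_polygon[OF P(1,2) reflexive_polygon_lattice_ray_bounded[OF assms]]
    unfolding contains_basic_polygon_def by blast
  then have "triangle a b \<subseteq> P \<or> square a b \<subseteq> P \<or> skew_triangle a b \<subseteq> P"
    unfolding triangle_def square_def skew_triangle_def using hull_minimal[where S = convex, OF _ P(3)] by blast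
  then consider "triangle a b \<subseteq> P" | "square a b \<subseteq> P" | "skew_triangle a b \<subseteq> P"
    by blast
  then show ?thesis
  proof cases
    case 1
    then have "zigzag reflexive_polygon P (triangle a b)"
      by (intro zigzag_supset assms reflexive_basic_polygons(1)[OF uni])
    moreover have "zigzag reflexive_polygon (triangle a b) (square (1,0) (0,1))"
      using reflexive_basic_polygons uni by (intro zigzag_triangle_std) blast+
    ultimately show ?thesis
      by (rule zigzag_trans)
  next
    case 2
    then have "zigzag reflexive_polygon P (square a b)"
      by (intro zigzag_supset assms reflexive_basic_polygons(3)[OF uni])
    moreover have "zigzag reflexive_polygon (square a b) (square (1,0) (0,1))"
      using reflexive_basic_polygons uni by (intro zigzag_square_std) blast+
    ultimately show ?thesis
      by (rule zigzag_trans)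
  next
    case 3
    then have "zigzag reflexive_polygon P (skew_triangle a b)"
      by (intro zigzag_supset assms reflexive_basic_polygons(4)[OF uni])
    then show ?thesis
      using zigzag_skew_triangle_std[OF uni] by (rule zigzag_trans)
  qed
qed

lemma zigzag_terminal_polygon_std:
  assumes "terminal_polygon P"
  shows "zigzag terminal_polygon P (square (1,0) (0,1))"
proof -
  have P: "lattice_polygon P" "0 \<in> interior P" "convex P"
    using assms unfolding terminal_polygon_def lattice_polygon_def by auto
  obtain a b where uni: "unimodular a b" and
    "lat ` {a, b, -a-b} \<subseteq> P \<or> lat ` {a, b, -a, -b} \<subseteq> P \<or> lat ` {a, b, -a-b-b} \<subseteq> P"
    using lattice_polygon_contains_basic_polygon[OF P(1,2) terminal_polygon_lattice_ray_bounded[OF assms]]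
    unfolding contains_basic_polygon_def by blast
  then have "triangle a b \<subseteq> P \<or> square a b \<subseteq> P"
    unfolding triangle_def square_def
    using hull_minimal[where S = convex, OF _ P(3)] terminal_polygon_not_contains_skew_triangle[OF assms uni] by blast
  then consider "triangle a b \<subseteq> P" | "square a b \<subseteq> P"
    by blast
  then show ?thesis
  proof cases
    case 1
    then have "zigzag terminal_polygon P (triangle a b)"
      by (intro zigzag_supset assms terminal_basic_polygons(1)[OF uni])
    moreover have "zigzag terminal_polygon (triangle a b) (square (1,0) (0,1))"
      using terminal_basic_polygons uni by (intro zigzag_triangle_std) blast+
    ultimately show ?thesis
      by (rule zigzag_trans)
  next
    case 2
    then have "zigzag terminal_polygon P (square a b)"
      by (intro zigzag_supset assms terminal_basic_polygons(2)[OF uni])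
    moreover have "zigzag terminal_polygon (square a b) (square (1,0) (0,1))"
      using terminal_basic_polygons uni by (intro zigzag_square_std) blast+
    ultimately show ?thesis
      by (rule zigzag_trans)
  qed
qed

theorem theorem1p3:
  shows "(\<forall>P P'. reflexive_polygon P \<and> reflexive_polygon P' \<longrightarrow>
            (\<exists>(k::nat) (Q::nat \<Rightarrow> (real \<times> real) set).
               Q 0 = P \<and> Q k = P' \<and> (\<forall>i\<le>k. reflexive_polygon (Q i)) \<and>
               (\<forall>i<k. Q i \<subseteq> Q (Suc i) \<or> Q (Suc i) \<subseteq> Q i)))
       \<and> (\<forall>P P'. terminal_polygon P \<and> terminal_polygon P' \<longrightarrow>
            (\<exists>(k::nat) (Q::nat \<Rightarrow> (real \<times> real) set).
               Q 0 = P \<and> Q k = P' \<and> (\<forall>i\<le>k. terminal_polygon (Q i)) \<and>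
               (\<forall>i<k. Q i \<subseteq> Q (Suc i) \<or> Q (Suc i) \<subseteq> Q i)))"
  unfolding zigzag_def[symmetric]
  using zigzag_reflexive_polygon_std zigzag_terminal_polygon_std zigzag_sym zigzag_trans
  by metis

end
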